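(* Let $G=(X,b,m,c)$ be a weighted graph with $c=0$ and let $p\in(1,\infty)$. Let $o\in X$ and let $(X_n)$ be an increasing exhaustion of $X$ by finite sets with $o\in X_1$ and $X_{n+1}\setminus X_n\subseteq\partial_eX_n$. (a) For every $n$ there is $u_n\colon X\to\mathbb{R}$ with $\Delta_pu_n=0$ on $X_n\setminus\{o\}$, $u_n(o)=1$, $u_n=0$ on $X\setminus X_n$, and $\mathcal{E}_p(u_n)=\mathrm{cap}_p(o,X_n)$. Moreover $0\le u_n\le u_{n+1}\le1$. (b) As $n\to\infty$, $u_n$ converges monotonically and in $(D^p,\|\cdot\|_{o,p})$ to a function $u\in D_0^p$ (the $p$-harmonic potential at $o$) which satisfies $\Delta_pu=0$ on $X\setminus\{o\}$, $u(o)=1$, $0<u\le1$, and $\mathcal{E}_p(u)=\mathrm{cap}_p(o)$. (c) $u$ is constant if and only if $\mathrm{cap}_p(o)=0$ if and only if $\Delta_pu(o)=0$. Moreover, if $u$ is not constant then $\inf u=0$. (d) A Green's function with pole $o$ exists if and only if $u$ is not constant, and in that case $g(x,o)=Cu(x)$ with $C=[m(o)\Delta_pu(o)]^{-1/(p-1)}$. In particular $g(\cdot,o)\in D_0^p$ and $g(o,o)^{-1/(p-1)}g(\cdot,o)$ is the $p$-harmonic potential at $o$.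
   Context: Weighted graph $G=(X,b,m,c)$: $X$ countably infinite; $b$ symmetric, nonnegative, zero on the diagonal, $\sum_yb(x,y)<\infty$; $m>0$; $c\ge0$; $x\sim y$ iff $b(x,y)>0$; $X$ connected. $\partial_eV=\{y\in X\setminus V:y\sim z\text{ for some }z\in V\}$. $\mathcal{E}_p(f)=\frac12\sum_{x,y}b(x,y)|f(x)-f(y)|^p+\sum_xc(x)|f(x)|^p$, $D^p=\{f:\mathcal{E}_p(f)<\infty\}$, $\|f\|_{o,p}=(\mathcal{E}_p(f)+|f(o)|^p)^{1/p}$, and $D_0^p$ is the closure of the finitely supported functions $C_c(X)$ in $(D^p,\|\cdot\|_{o,p})$. For $V\subseteq X$ and finite $K\subseteq V$, $\mathrm{cap}_p(K,V)=\inf\{\mathcal{E}_p(\varphi):\varphi\in C_c(V),\varphi\ge1\text{ on }K\}$ ($C_c(V)$: finitely supported functions vanishing outside $V$), $\mathrm{cap}_p(o,V)=\mathrm{cap}_p(\{o\},V)$, $\mathrm{cap}_p(o)=\mathrm{cap}_p(o,X)$. $a^{\langle p-1\rangle}=|a|^{p-2}a$; $\Delta_pf(x)=\frac1{m(x)}\sum_yb(x,y)(f(x)-f(y))^{\langle p-1\rangle}$. A Green's function with pole $o$ is a minimal positive solution $g(\cdot,o)$ of $\Delta_pg(\cdot,o)=\frac1m\mathds{1}_o$ on $X$. *)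

theory Defs
  imports "HOL-Analysis.Analysis"
begin

text \<open>Weighted graph (X,b,m,c) with vertex set = UNIV of type 'a.\<close>
definition weighted_graph :: "('a \<Rightarrow> 'a \<Rightarrow> real) \<Rightarrow> ('a \<Rightarrow> real) \<Rightarrow> ('a \<Rightarrow> real) \<Rightarrow> bool" where
  "weighted_graph b m c \<longleftrightarrow>
     countable (UNIV :: 'a set) \<and> infinite (UNIV :: 'a set) \<and>
     (\<forall>x y. b x y = b y x) \<and> (\<forall>x y. 0 \<le> b x y) \<and> (\<forall>x. b x x = 0) \<and>
     (\<forall>x. (\<lambda>y. b x y) summable_on UNIV) \<and>
     (\<forall>x. 0 < m x) \<and> (\<forall>x. 0 \<le> c x) \<and>
     (\<forall>x y. (x, y) \<in> {(x, y). 0 < b x y}\<^sup>*)"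

definition edge_bdry :: "('a \<Rightarrow> 'a \<Rightarrow> real) \<Rightarrow> 'a set \<Rightarrow> 'a set" where
  "edge_bdry b V = {y. y \<notin> V \<and> (\<exists>z\<in>V. 0 < b y z)}"

text \<open>p-energy (as an infinite sum; meaningful on D^p).\<close>
definition energy :: "('a \<Rightarrow> 'a \<Rightarrow> real) \<Rightarrow> ('a \<Rightarrow> real) \<Rightarrow> real \<Rightarrow> ('a \<Rightarrow> real) \<Rightarrow> real" where
  "energy b c p f =
     (1/2) * (\<Sum>\<^sub>\<infinity>(x, y)\<in>UNIV. b x y * \<bar>f x - f y\<bar> powr p)
     + (\<Sum>\<^sub>\<infinity>x\<in>UNIV. c x * \<bar>f x\<bar> powr p)"

text \<open>D^p: functions of finite p-energy (nonnegative summands, so summability = finiteness).\<close>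
definition Dp :: "('a \<Rightarrow> 'a \<Rightarrow> real) \<Rightarrow> ('a \<Rightarrow> real) \<Rightarrow> real \<Rightarrow> ('a \<Rightarrow> real) set" where
  "Dp b c p = {f. (\<lambda>(x, y). b x y * \<bar>f x - f y\<bar> powr p) summable_on UNIV
                 \<and> (\<lambda>x. c x * \<bar>f x\<bar> powr p) summable_on UNIV}"

definition dnorm_op :: "('a \<Rightarrow> 'a \<Rightarrow> real) \<Rightarrow> ('a \<Rightarrow> real) \<Rightarrow> real \<Rightarrow> 'a \<Rightarrow> ('a \<Rightarrow> real) \<Rightarrow> real" where
  "dnorm_op b c p x0 f = (energy b c p f + \<bar>f x0\<bar> powr p) powr (1/p)"

definition D0p :: "('a \<Rightarrow> 'a \<Rightarrow> real) \<Rightarrow> ('a \<Rightarrow> real) \<Rightarrow> real \<Rightarrow> 'a \<Rightarrow> ('a \<Rightarrow> real) set" where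
  "D0p b c p x0 = {f. f \<in> Dp b c p \<and>
      (\<forall>e>0. \<exists>\<phi>. finite {x. \<phi> x \<noteq> 0} \<and> dnorm_op b c p x0 (\<lambda>x. f x - \<phi> x) < e)}"

definition cap :: "('a \<Rightarrow> 'a \<Rightarrow> real) \<Rightarrow> ('a \<Rightarrow> real) \<Rightarrow> real \<Rightarrow> 'a set \<Rightarrow> 'a set \<Rightarrow> real" where
  "cap b c p K V = Inf {energy b c p \<phi> | \<phi>. finite {x. \<phi> x \<noteq> 0} \<and> (\<forall>x. x \<notin> V \<longrightarrow> \<phi> x = 0)
                                         \<and> (\<forall>x\<in>K. 1 \<le> \<phi> x)}"

text \<open>a^{<q>} with q = p-1: |a|^{p-2} a = sgn a * |a|^{p-1}.\<close>
definition spow :: "real \<Rightarrow> real \<Rightarrow> real" where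
  "spow q a = sgn a * \<bar>a\<bar> powr q"

text \<open>Functions for which the p-Laplacian is defined (absolutely convergent sums).\<close>
definition Fp :: "('a \<Rightarrow> 'a \<Rightarrow> real) \<Rightarrow> real \<Rightarrow> ('a \<Rightarrow> real) set" where
  "Fp b p = {f. \<forall>x. (\<lambda>y. b x y * \<bar>f x - f y\<bar> powr (p - 1)) summable_on UNIV}"

definition plap :: "('a \<Rightarrow> 'a \<Rightarrow> real) \<Rightarrow> ('a \<Rightarrow> real) \<Rightarrow> real \<Rightarrow> ('a \<Rightarrow> real) \<Rightarrow> 'a \<Rightarrow> real" where
  "plap b m p f x = (1 / m x) * (\<Sum>\<^sub>\<infinity>y\<in>UNIV. b x y * spow (p - 1) (f x - f y))"

definition green_eq :: "('a \<Rightarrow> 'a \<Rightarrow> real) \<Rightarrow> ('a \<Rightarrow> real) \<Rightarrow> real \<Rightarrow> 'a \<Rightarrow> ('a \<Rightarrow> real) \<Rightarrow> bool" where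
  "green_eq b m p x0 g \<longleftrightarrow> (\<forall>x. 0 < g x) \<and> g \<in> Fp b p \<and>
      (\<forall>x. plap b m p g x = (if x = x0 then 1 / m x else 0))"

definition is_green :: "('a \<Rightarrow> 'a \<Rightarrow> real) \<Rightarrow> ('a \<Rightarrow> real) \<Rightarrow> real \<Rightarrow> 'a \<Rightarrow> ('a \<Rightarrow> real) \<Rightarrow> bool" where
  "is_green b m p x0 g \<longleftrightarrow> green_eq b m p x0 g \<and>
      (\<forall>h. green_eq b m p x0 h \<longrightarrow> (\<forall>x. g x \<le> h x))"

definition dirichlet_sol :: "('a \<Rightarrow> 'a \<Rightarrow> real) \<Rightarrow> ('a \<Rightarrow> real) \<Rightarrow> ('a \<Rightarrow> real) \<Rightarrow> real \<Rightarrow> 'a \<Rightarrow> 'a set \<Rightarrow> ('a \<Rightarrow> real) \<Rightarrow> bool" where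
  "dirichlet_sol b m c p x0 V v \<longleftrightarrow> v \<in> Fp b p \<and>
      (\<forall>x\<in>V - {x0}. plap b m p v x = 0) \<and> v x0 = 1 \<and> (\<forall>x. x \<notin> V \<longrightarrow> v x = 0) \<and>
      energy b c p v = cap b c p {x0} V"

end

theory Submission
  imports Defs
begin

text \<open>On each finite \<open>X n\<close> the Dirichlet problem is solved by a monotone nonlinear Jacobi
  iteration. Its solution \<open>u\<^sub>n\<close> minimises the energy among the test functions for
  \<open>cap\<^sub>p(o, X\<^sub>n)\<close>: summing the tangent-line inequality of the convex map \<open>t \<mapsto> \<bar>t\<bar>\<^sup>p\<close>
  over the edges and integrating the linear term by parts leaves only the value at \<open>o\<close>.
  Comparison principles give \<open>0 \<le> u\<^sub>n \<le> u\<^sub>n\<^sub>+\<^sub>1 \<le> 1\<close>, and the limit \<open>u\<close> is p-harmonic off \<open>o\<close> by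
  dominated convergence. Fatou and the same tangent inequality give
  \<open>\<E>(u) = lim cap\<^sub>p(o, X\<^sub>n) = cap\<^sub>p(o)\<close>, and Pratt's lemma upgrades this to convergence in
  norm. By connectedness, \<open>u\<close> is constant iff its energy vanishes; if \<open>\<epsilon> = inf u > 0\<close> then
  comparison gives \<open>\<epsilon> + (1 - \<epsilon>) u \<le> u\<close>, i.e. \<open>u = 1\<close>. Finally, every positive solution \<open>h\<close> of
  \<open>\<Delta>\<^sub>p h = 1\<^sub>o / m\<close> dominates the rescaled \<open>u\<^sub>n\<close> by comparison, so \<open>C u\<close> is the minimal one;
  if \<open>u\<close> is constant, such an \<open>h\<close> would have its minimum at \<open>o\<close>, contradicting \<open>\<Delta>\<^sub>p h(o) > 0\<close>.\<close>

section \<open>Signed powers\<close>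

lemma powr_ge_bernoulli:
  fixes s p :: real
  assumes "1 < p" "0 \<le> s"
  shows "1 + p * (s - 1) \<le> s powr p"
proof (cases "s = 0")
  case True
  then show ?thesis using assms by simp
next
  case False
  have "p * (x - 1) \<le> (\<lambda>x. x powr p) x - (\<lambda>x. x powr p) 1" if "0 < x" for x
  proof (rule convex_on_imp_above_tangent[where A="{0<..}"])
    show "convex_on {0<..} (\<lambda>x. x powr p)" using powr_convex assms by simp
    show "((\<lambda>x. x powr p) has_field_derivative p) (at 1 within {0<..})"
      by (rule derivative_eq_intros | simp)+
  qed (use that in \<open>auto simp: interior_open\<close>)
  from this[of s] False assms show ?thesis by simp
qed

lemma spow_0 [simp]: "spow q 0 = 0"
  by (simp add: spow_def)

lemma spow_minus: "spow q (- a) = - spow q a"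
  by (simp add: spow_def)

lemma abs_spow: "\<bar>spow q a\<bar> = \<bar>a\<bar> powr q"
  by (cases "a = 0") (simp_all add: spow_def abs_mult)

lemma spow_of_pos: "0 < a \<Longrightarrow> spow q a = a powr q"
  by (simp add: spow_def)

lemma spow_of_neg: "a < 0 \<Longrightarrow> spow q a = - ((- a) powr q)"
  by (simp add: spow_def)

lemma spow_nonneg_iff: "0 \<le> spow q a \<longleftrightarrow> 0 \<le> a"
  by (cases "a > 0"; cases "a = 0") (auto simp: spow_def)

lemma spow_nonpos_iff: "spow q a \<le> 0 \<longleftrightarrow> a \<le> 0"
  by (cases "a > 0"; cases "a = 0") (auto simp: spow_def)

lemma spow_strict_mono:
  assumes "0 < q" "a < c"
  shows "spow q a < spow q c"
proof -
  consider "0 \<le> a" | "a < 0" "c \<le> 0" | "a < 0" "0 < c" by linarith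
  then show ?thesis
  proof cases
    case 1
    then show ?thesis using assms
      by (cases "a = 0") (auto simp: spow_def intro!: powr_less_mono2)
  next
    case 2
    then show ?thesis using assms
      by (cases "c = 0") (auto simp: spow_def intro!: powr_less_mono2)
  next
    case 3
    then have "spow q a < 0" "0 < spow q c"
      by (simp_all add: spow_of_neg spow_of_pos)
    then show ?thesis by linarith
  qed
qed

lemma spow_mono: "0 < q \<Longrightarrow> a \<le> c \<Longrightarrow> spow q a \<le> spow q c"
  using spow_strict_mono[of q a c] by (cases "a = c") auto

lemma spow_eq_iff: "0 < q \<Longrightarrow> spow q a = spow q c \<longleftrightarrow> a = c"
  using spow_strict_mono[of q a c] spow_strict_mono[of q c a]
  by (cases a c rule: linorder_cases) auto

lemma spow_times_self:
  assumes "0 \<le> q"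
  shows "spow q a * a = \<bar>a\<bar> powr (q + 1)"
proof (cases "a = 0")
  case False
  have "spow q a * a = \<bar>a\<bar> powr q * \<bar>a\<bar>"
    by (simp add: spow_def) (metis abs_sgn mult.commute sgn_mult_abs)
  then show ?thesis using False by (simp add: powr_add)
qed simp

lemma spow_mult_nonneg: "0 \<le> c \<Longrightarrow> spow q (c * a) = c powr q * spow q a"
  by (cases "c = 0") (auto simp: spow_def abs_mult powr_mult sgn_mult)

lemma abs_spow_le: "0 \<le> q \<Longrightarrow> \<bar>a\<bar> \<le> M \<Longrightarrow> \<bar>spow q a\<bar> \<le> M powr q"
  by (simp add: abs_spow powr_mono2)

lemma tendsto_spow:
  fixes a :: "nat \<Rightarrow> real"
  assumes q: "0 < q" and a: "a \<longlonglongrightarrow> l"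
  shows "(\<lambda>n. spow q (a n)) \<longlonglongrightarrow> spow q l"
proof -
  consider "0 < l" | "l < 0" | "l = 0" by linarith
  then show ?thesis
  proof cases
    case 1
    have "eventually (\<lambda>n. a n powr q = spow q (a n)) sequentially"
      using order_tendstoD(1)[OF a 1] by eventually_elim (simp add: spow_of_pos)
    moreover have "(\<lambda>n. a n powr q) \<longlonglongrightarrow> spow q l"
      using 1 a by (auto simp: spow_of_pos intro!: tendsto_intros)
    ultimately show ?thesis by (rule Lim_transform_eventually[rotated])
  next
    case 2
    have "eventually (\<lambda>n. - ((- a n) powr q) = spow q (a n)) sequentially"
      using order_tendstoD(2)[OF a 2] by eventually_elim (simp add: spow_of_neg)
    moreover have "(\<lambda>n. - ((- a n) powr q)) \<longlonglongrightarrow> spow q l"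
      using 2 a by (auto simp: spow_of_neg intro!: tendsto_intros)
    ultimately show ?thesis by (rule Lim_transform_eventually[rotated])
  next
    case 3
    have "(\<lambda>n. \<bar>a n\<bar> powr q) \<longlonglongrightarrow> \<bar>l\<bar> powr q"
      using q by (intro tendsto_powr' tendsto_intros a) auto
    then have "(\<lambda>n. \<bar>spow q (a n)\<bar>) \<longlonglongrightarrow> 0"
      using 3 by (simp add: abs_spow)
    then show ?thesis
      using 3 by (simp add: tendsto_rabs_zero_iff)
  qed
qed

text \<open>The map \<open>t \<mapsto> \<bar>t\<bar> powr p\<close> is convex with derivative \<open>p * spow (p - 1) t\<close>; this is its
  tangent-line inequality at \<open>a\<close>, rearranged using \<open>spow (p - 1) a * a = \<bar>a\<bar> powr p\<close>.\<close>

lemma abs_powr_above_tangent: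
  fixes a c p :: real
  assumes p: "1 < p"
  shows "(1 - p) * \<bar>a\<bar> powr p + p * spow (p - 1) a * c \<le> \<bar>c\<bar> powr p"
proof (cases "a = 0")
  case True
  then show ?thesis by simp
next
  case False
  define s where "s = c / a"
  have c: "c = s * a" using False by (simp add: s_def)
  have bernoulli: "1 + p * (s - 1) \<le> \<bar>s\<bar> powr p"
  proof (cases "0 \<le> s")
    case True
    then show ?thesis using powr_ge_bernoulli[OF p] by simp
  next
    case False
    have "p * (s - 1) \<le> p * (- 1)" using p False by (intro mult_left_mono) auto
    then have "1 + p * (s - 1) \<le> 0" using p by linarith
    then show ?thesis using powr_ge_zero[of "\<bar>s\<bar>" p] by linarith
  qed
  have "spow (p - 1) a * a = \<bar>a\<bar> powr p"
    using spow_times_self[of "p - 1" a] p by simp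
  then have "(1 - p) * \<bar>a\<bar> powr p + p * spow (p - 1) a * c = \<bar>a\<bar> powr p * (1 + p * (s - 1))"
    unfolding c by (simp add: algebra_simps)
  also have "\<dots> \<le> \<bar>a\<bar> powr p * \<bar>s\<bar> powr p"
    using bernoulli by (simp add: mult_left_mono)
  also have "\<dots> = \<bar>c\<bar> powr p"
    by (simp add: c abs_mult powr_mult)
  finally show ?thesis .
qed

lemma abs_diff_powr_le:
  fixes a c p :: real
  assumes "0 < p"
  shows "\<bar>a - c\<bar> powr p \<le> 2 powr p * (\<bar>a\<bar> powr p + \<bar>c\<bar> powr p)"
proof -
  have "\<bar>a - c\<bar> powr p \<le> (2 * max \<bar>a\<bar> \<bar>c\<bar>) powr p"
    using assms by (intro powr_mono2) auto
  also have "\<dots> = 2 powr p * max \<bar>a\<bar> \<bar>c\<bar> powr p"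
    by (simp add: powr_mult)
  also have "\<dots> \<le> 2 powr p * (\<bar>a\<bar> powr p + \<bar>c\<bar> powr p)"
    by (intro mult_left_mono) (auto simp: max_def)
  finally show ?thesis .
qed

section \<open>Infinite sums\<close>

lemma summable_on_diff:
  fixes f g :: "'b \<Rightarrow> real"
  assumes "f summable_on A" "g summable_on A"
  shows "(\<lambda>x. f x - g x) summable_on A"
  using summable_on_add[OF assms(1) summable_on_uminus[THEN iffD2, OF assms(2)]] by simp

lemma infsum_diff:
  fixes f g :: "'b \<Rightarrow> real"
  assumes "f summable_on A" "g summable_on A"
  shows "infsum (\<lambda>x. f x - g x) A = infsum f A - infsum g A"
  using infsum_add[OF assms(1) summable_on_uminus[THEN iffD2, OF assms(2)]]
  by (simp add: infsum_uminus)

lemma summable_on_abs_le: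
  fixes f :: "'b \<Rightarrow> real"
  assumes "g summable_on A" "\<And>x. x \<in> A \<Longrightarrow> \<bar>f x\<bar> \<le> g x"
  shows "f summable_on A"
  using abs_summable_summable[of f A] summable_on_comparison_test[OF assms(1), of "\<lambda>x. \<bar>f x\<bar>"]
    assms(2) by auto

lemma infsum_split_finite:
  fixes g :: "'b \<Rightarrow> real"
  assumes "g summable_on UNIV" "finite F"
  shows "infsum g UNIV = sum g F + infsum g (- F)"
proof -
  have "UNIV = F \<union> - F" by auto
  then show ?thesis
    using infsum_Un_disjoint[of g F "- F"] summable_on_subset[OF assms(1)] assms(2) by auto
qed

lemma infsum_le_sum_plus_tails:
  fixes h a A :: "'b \<Rightarrow> real"
  assumes "h summable_on UNIV" "a summable_on UNIV" "A summable_on UNIV" "finite F"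
    and "\<And>z. h z \<le> K * (a z + A z)" "0 \<le> K"
  shows "infsum h UNIV \<le> sum h F + K * (infsum a (- F) + infsum A (- F))"
proof -
  have sub: "h summable_on (- F)" "a summable_on (- F)" "A summable_on (- F)"
    using assms(1-3) by (auto intro: summable_on_subset)
  have "infsum h (- F) \<le> infsum (\<lambda>z. K * (a z + A z)) (- F)"
    using sub assms(5) by (intro infsum_mono summable_on_cmult_right summable_on_add)
  also have "\<dots> = K * (infsum a (- F) + infsum A (- F))"
    using sub by (simp add: infsum_cmult_right' infsum_add)
  finally show ?thesis
    using infsum_split_finite[OF assms(1,4)] by simp
qed

lemma infsum_tendsto_0_Pratt:
  fixes a h :: "nat \<Rightarrow> 'b \<Rightarrow> real" and A :: "'b \<Rightarrow> real"
  assumes a_summable: "\<And>n. a n summable_on UNIV" and A_summable: "A summable_on UNIV"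
    and a_nonneg: "\<And>n z. 0 \<le> a n z" and h_nonneg: "\<And>n z. 0 \<le> h n z"
    and infsum_a: "(\<lambda>n. infsum (a n) UNIV) \<longlonglongrightarrow> infsum A UNIV"
    and a_lim: "\<And>z. (\<lambda>n. a n z) \<longlonglongrightarrow> A z" and h_lim: "\<And>z. (\<lambda>n. h n z) \<longlonglongrightarrow> 0"
    and K: "0 \<le> K" and h_le: "\<And>n z. h n z \<le> K * (a n z + A z)"
  shows "(\<lambda>n. infsum (h n) UNIV) \<longlonglongrightarrow> 0"
proof (rule tendstoI)
  fix e :: real
  assume e: "0 < e"
  define K' where "K' = 1 + 3 * K"
  define d where "d = e / (2 * K')"
  have "0 < K'" using K by (simp add: K'_def)
  then have "0 < d" "d * K' = e / 2"
    using e by (simp_all add: d_def)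
  then have d: "0 < d" "d + K * (3 * d) < e"
    using e by (simp_all add: K'_def algebra_simps)
  have A_nonneg: "0 \<le> A z" for z
    using a_nonneg by (intro LIMSEQ_le_const[OF a_lim]) auto
  have h_summable: "h n summable_on UNIV" for n
  proof (rule summable_on_comparison_test)
    show "(\<lambda>z. K * (a n z + A z)) summable_on UNIV"
      by (intro summable_on_cmult_right summable_on_add a_summable A_summable)
  qed (use h_le h_nonneg in auto)
  obtain F where F: "finite F" "dist (sum A F) (infsum A UNIV) \<le> d"
    using infsum_finite_approximation[OF A_summable d(1)] by blast
  note split = infsum_split_finite[OF _ F(1)]
  have A_tail: "infsum A (- F) \<le> d"
    using F(2) split[OF A_summable] by (simp add: dist_real_def)
  have "(\<lambda>n. infsum (a n) UNIV - sum (a n) F) \<longlonglongrightarrow> infsum A UNIV - sum A F"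
    by (intro tendsto_diff infsum_a tendsto_sum a_lim)
  then have "eventually (\<lambda>n. infsum (a n) UNIV - sum (a n) F < infsum A UNIV - sum A F + d) sequentially"
    using d by (intro order_tendstoD) auto
  moreover have "(\<lambda>n. sum (h n) F) \<longlonglongrightarrow> 0"
    using tendsto_sum[OF h_lim, where I=F] by simp
  then have "eventually (\<lambda>n. sum (h n) F < d) sequentially"
    using d by (intro order_tendstoD) auto
  ultimately show "eventually (\<lambda>n. dist (infsum (h n) UNIV) 0 < e) sequentially"
  proof eventually_elim
    case (elim n)
    have "infsum (a n) (- F) < 2 * d"
      using elim(1) split[OF a_summable[of n]] split[OF A_summable] A_tail by linarith
    then have "K * (infsum (a n) (- F) + infsum A (- F)) \<le> K * (3 * d)"
      using A_tail K by (intro mult_left_mono) auto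
    then have "infsum (h n) UNIV < d + K * (3 * d)"
      using infsum_le_sum_plus_tails[OF h_summable[of n] a_summable[of n] A_summable F(1) h_le[of n] K]
        elim(2)
      by linarith
    moreover have "0 \<le> infsum (h n) UNIV"
      using h_nonneg by (intro infsum_nonneg) auto
    ultimately show ?case using d by (simp add: dist_real_def)
  qed
qed

lemma tendsto_infsum_dominated:
  fixes F :: "nat \<Rightarrow> 'b \<Rightarrow> real"
  assumes g: "g summable_on UNIV" and bound: "\<And>n y. \<bar>F n y\<bar> \<le> g y"
    and lim: "\<And>y. (\<lambda>n. F n y) \<longlonglongrightarrow> f y"
  shows "(\<lambda>n. infsum (F n) UNIV) \<longlonglongrightarrow> infsum f UNIV"
proof -
  have f_bound: "\<bar>f y\<bar> \<le> g y" for y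
    using bound by (intro LIMSEQ_le_const2[OF tendsto_rabs[OF lim]]) auto
  have g_nonneg: "0 \<le> g y" for y
    using bound[of 0 y] by linarith
  have diff_summable: "(\<lambda>y. F n y - f y) summable_on UNIV" for n
    using summable_on_abs_le[OF g bound] summable_on_abs_le[OF g f_bound]
    by (rule summable_on_diff)
  have Pratt: "(\<lambda>n. infsum (\<lambda>y. \<bar>F n y - f y\<bar>) UNIV) \<longlonglongrightarrow> 0"
  proof (rule infsum_tendsto_0_Pratt[where a="\<lambda>_. g" and A=g and K=1])
    show "(\<lambda>n. \<bar>F n y - f y\<bar>) \<longlonglongrightarrow> 0" for y
      using tendsto_rabs[OF tendsto_diff[OF lim[of y] tendsto_const[of "f y"]]] by simp
    show "\<bar>F n y - f y\<bar> \<le> 1 * (g y + g y)" for n y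
      using bound[of n y] f_bound[of y] abs_triangle_ineq4[of "F n y" "f y"]
      unfolding mult_1 by linarith
  qed (simp_all add: g g_nonneg)
  have diff_le: "norm (infsum (F n) UNIV - infsum f UNIV) \<le> infsum (\<lambda>y. \<bar>F n y - f y\<bar>) UNIV" for n
  proof -
    have "infsum (F n) UNIV - infsum f UNIV = infsum (\<lambda>y. F n y - f y) UNIV"
      using summable_on_abs_le[OF g bound] summable_on_abs_le[OF g f_bound]
      by (rule infsum_diff[symmetric])
    also have "norm \<dots> \<le> infsum (\<lambda>y. norm (F n y - f y)) UNIV"
      using diff_summable[of n, THEN summable_on_iff_abs_summable_on_real[THEN iffD1]]
      by (rule norm_infsum_bound)
    finally show ?thesis by simp
  qed
  have "(\<lambda>n. infsum (F n) UNIV - infsum f UNIV) \<longlonglongrightarrow> 0"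
    using always_eventually[OF allI[OF diff_le]] Pratt by (rule Lim_null_comparison)
  then show ?thesis
    by (simp only: LIM_zero_iff)
qed

lemma abs_le_sum_finite_support:
  fixes f :: "'b \<Rightarrow> real"
  assumes "finite A" "\<And>x. x \<notin> A \<Longrightarrow> f x = 0"
  shows "\<bar>f x\<bar> \<le> (\<Sum>y\<in>A. \<bar>f y\<bar>)"
proof (cases "x \<in> A")
  case True
  then show ?thesis using assms(1) by (intro member_le_sum) auto
next
  case False
  then show ?thesis using assms by (simp add: sum_nonneg)
qed

lemma finite_subset_incseq:
  fixes X :: "nat \<Rightarrow> 'a set"
  assumes "incseq X" "finite F" "F \<subseteq> (\<Union>n. X n)"
  shows "\<exists>N. F \<subseteq> X N"
  using assms(2,3)
proof (induction F rule: finite_induct)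
  case (insert x F)
  then obtain N N' where "F \<subseteq> X N" "x \<in> X N'" by blast
  moreover have "X N \<subseteq> X (max N N')" "X N' \<subseteq> X (max N N')"
    using assms(1) by (simp_all add: incseq_def)
  ultimately have "insert x F \<subseteq> X (max N N')" by blast
  then show ?case by blast
qed simp

section \<open>The p-Laplacian on a weighted graph\<close>

text \<open>\<open>plap_sum b p f x\<close> is \<open>m x * plap b m p f x\<close> (\<open>plap_eq_plap_sum\<close>); the variant
  \<open>plap_sum_at\<close> takes the value at the centre \<open>x\<close> as a separate argument \<open>t\<close>.\<close>

definition plap_sum_at :: "('a \<Rightarrow> 'a \<Rightarrow> real) \<Rightarrow> real \<Rightarrow> 'a \<Rightarrow> real \<Rightarrow> ('a \<Rightarrow> real) \<Rightarrow> real" where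
  "plap_sum_at b p x t f = (\<Sum>\<^sub>\<infinity>y. b x y * spow (p - 1) (t - f y))"

abbreviation plap_sum :: "('a \<Rightarrow> 'a \<Rightarrow> real) \<Rightarrow> real \<Rightarrow> ('a \<Rightarrow> real) \<Rightarrow> 'a \<Rightarrow> real" where
  "plap_sum b p f x \<equiv> plap_sum_at b p x (f x) f"

definition edge_energy :: "('a \<Rightarrow> 'a \<Rightarrow> real) \<Rightarrow> real \<Rightarrow> ('a \<Rightarrow> real) \<Rightarrow> 'a \<times> 'a \<Rightarrow> real" where
  "edge_energy b p f = (\<lambda>(x, y). b x y * \<bar>f x - f y\<bar> powr p)"

definition cap_admissible :: "'a set \<Rightarrow> 'a set \<Rightarrow> ('a \<Rightarrow> real) \<Rightarrow> bool" where
  "cap_admissible K V \<phi> \<longleftrightarrow>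
     finite {x. \<phi> x \<noteq> 0} \<and> (\<forall>x. x \<notin> V \<longrightarrow> \<phi> x = 0) \<and> (\<forall>x\<in>K. 1 \<le> \<phi> x)"

lemma cap_eq_Inf: "cap b c p K V = Inf (energy b c p ` Collect (cap_admissible K V))"
  unfolding cap_def cap_admissible_def by (rule arg_cong[where f=Inf]) auto

locale plap_graph =
  fixes b :: "'a \<Rightarrow> 'a \<Rightarrow> real" and m :: "'a \<Rightarrow> real" and p :: real
  assumes graph: "weighted_graph b m (\<lambda>_. 0)" and p_gt_1: "1 < p"
begin

abbreviation \<E> :: "('a \<Rightarrow> real) \<Rightarrow> real" where
  "\<E> \<equiv> energy b (\<lambda>_. 0) p"

abbreviation capacity :: "'a set \<Rightarrow> 'a set \<Rightarrow> real" where
  "capacity \<equiv> cap b (\<lambda>_. 0) p"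

lemma b_sym: "b x y = b y x"
  using graph unfolding weighted_graph_def by blast

lemma b_nonneg: "0 \<le> b x y"
  using graph unfolding weighted_graph_def by blast

lemma summable_b: "(\<lambda>y. b x y) summable_on UNIV"
  using graph unfolding weighted_graph_def by blast

lemma m_pos: "0 < m x"
  using graph unfolding weighted_graph_def by blast

lemma infinite_UNIV: "infinite (UNIV :: 'a set)"
  using graph unfolding weighted_graph_def by blast

lemma edge_closed_eq_UNIV:
  assumes "a \<in> S" and closed: "\<And>x y. x \<in> S \<Longrightarrow> 0 < b x y \<Longrightarrow> y \<in> S"
  shows "S = UNIV"
proof -
  have "y \<in> S" for y
  proof -
    have "(a, y) \<in> {(x, y). 0 < b x y}\<^sup>*"
      using graph unfolding weighted_graph_def by blast
    then show ?thesis
      by (induction rule: rtrancl_induct) (use assms in auto)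
  qed
  then show ?thesis by auto
qed

lemma ex_neighbour: "\<exists>y. 0 < b x y"
proof (rule ccontr)
  assume no_edge: "\<nexists>y. 0 < b x y"
  have "{x} = UNIV"
    by (rule edge_closed_eq_UNIV[of x]) (use no_edge in auto)
  then show False
    using infinite_UNIV by (metis finite.emptyI finite.insertI)
qed

lemma summable_on_row_bound:
  assumes "\<And>y. \<bar>f y\<bar> \<le> C * b x y"
  shows "f summable_on UNIV"
  using summable_on_cmult_right[OF summable_b] assms by (rule summable_on_abs_le)

lemma summable_on_pairs_finite_support:
  fixes f :: "'a \<times> 'a \<Rightarrow> real"
  assumes A: "finite A" and outside: "\<And>x y. x \<notin> A \<Longrightarrow> y \<notin> A \<Longrightarrow> f (x, y) = 0"
    and bound: "\<And>x y. \<bar>f (x, y)\<bar> \<le> C * b x y"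
  shows "f summable_on UNIV"
proof -
  define g where "g = (\<lambda>(x, y). if x \<in> A then \<bar>C\<bar> * b x y else 0)"
  have "g summable_on A \<times> UNIV"
  proof (rule summable_on_SigmaI[where g="\<lambda>x. \<bar>C\<bar> * infsum (\<lambda>y. b x y) UNIV"])
    show "((\<lambda>y. g (x, y)) has_sum \<bar>C\<bar> * infsum (\<lambda>y. b x y) UNIV) UNIV" if "x \<in> A" for x
      using that summable_b[of x] by (auto simp: g_def intro: has_sum_cmult_right)
  qed (use A b_nonneg in \<open>auto simp: g_def\<close>)
  then have g: "g summable_on UNIV"
    by (subst (asm) summable_on_cong_neutral[where T=UNIV and g=g]) (auto simp: g_def split: if_splits)
  have "(\<lambda>(x, y). g (y, x)) summable_on UNIV"
    using g summable_on_swap[of g UNIV UNIV] by simp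
  then have sum: "(\<lambda>z. g z + (case z of (x, y) \<Rightarrow> g (y, x))) summable_on UNIV"
    using g by (intro summable_on_add)
  have bound_g: "\<bar>f (x, y)\<bar> \<le> g (x, y) + g (y, x)" for x y
  proof -
    have "C * b x y \<le> \<bar>C\<bar> * b x y" "0 \<le> \<bar>C\<bar> * b x y"
      using b_nonneg[of x y] by (simp_all add: mult_right_mono)
    then show ?thesis
      using bound[of x y] outside[of x y] b_sym[of y x]
      by (cases "x \<in> A"; cases "y \<in> A") (simp_all add: g_def)
  qed
  show ?thesis
    by (rule summable_on_abs_le[OF sum]) (use bound_g in auto)
qed

lemma plap_eq_plap_sum: "plap b m p f x = plap_sum b p f x / m x"
  by (simp add: plap_def plap_sum_at_def)

lemma plap_sum_term_bound:
  assumes "\<bar>t\<bar> \<le> M" "\<bar>f y\<bar> \<le> M"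
  shows "\<bar>b x y * spow (p - 1) (t - f y)\<bar> \<le> (2 * M) powr (p - 1) * b x y"
proof -
  have "\<bar>spow (p - 1) (t - f y)\<bar> \<le> (2 * M) powr (p - 1)"
    using assms p_gt_1 by (intro abs_spow_le) auto
  then show ?thesis
    using b_nonneg[of x y] by (simp add: abs_mult mult.commute mult_left_mono)
qed

lemma summable_plap_sum_at:
  assumes "\<bar>t\<bar> \<le> M" "\<And>y. \<bar>f y\<bar> \<le> M"
  shows "(\<lambda>y. b x y * spow (p - 1) (t - f y)) summable_on UNIV"
  by (rule summable_on_row_bound) (rule plap_sum_term_bound[OF assms])

lemma bounded_in_Fp:
  assumes "\<And>x. \<bar>f x\<bar> \<le> M"
  shows "f \<in> Fp b p"
  unfolding Fp_def
proof (intro CollectI allI summable_on_row_bound)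
  show "\<bar>b x y * \<bar>f x - f y\<bar> powr (p - 1)\<bar> \<le> (2 * M) powr (p - 1) * b x y" for x y
    using plap_sum_term_bound[of "f x" M f y x] assms b_nonneg[of x y] by (simp add: abs_mult abs_spow)
qed

lemma const_in_Fp: "(\<lambda>_. k) \<in> Fp b p"
  by (rule bounded_in_Fp[where M="\<bar>k\<bar>"]) simp

lemma summable_plap_sum_Fp:
  assumes "f \<in> Fp b p"
  shows "(\<lambda>y. b x y * spow (p - 1) (f x - f y)) summable_on UNIV"
proof (rule summable_on_abs_le)
  show "(\<lambda>y. b x y * \<bar>f x - f y\<bar> powr (p - 1)) summable_on UNIV"
    using assms by (simp add: Fp_def)
  show "\<bar>b x y * spow (p - 1) (f x - f y)\<bar> \<le> b x y * \<bar>f x - f y\<bar> powr (p - 1)" for y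
    using b_nonneg[of x y] by (simp add: abs_mult abs_spow)
qed

lemma tendsto_plap_sum_at:
  assumes "\<And>k. \<bar>t k\<bar> \<le> M" "\<And>k y. \<bar>f k y\<bar> \<le> M"
    and "t \<longlonglongrightarrow> t'" "\<And>y. (\<lambda>k. f k y) \<longlonglongrightarrow> f' y"
  shows "(\<lambda>k. plap_sum_at b p x (t k) (f k)) \<longlonglongrightarrow> plap_sum_at b p x t' f'"
  unfolding plap_sum_at_def
proof (rule tendsto_infsum_dominated)
  show "(\<lambda>y. (2 * M) powr (p - 1) * b x y) summable_on UNIV"
    by (intro summable_on_cmult_right summable_b)
  show "(\<lambda>k. b x y * spow (p - 1) (t k - f k y)) \<longlonglongrightarrow> b x y * spow (p - 1) (t' - f' y)" for y
    using assms p_gt_1 by (intro tendsto_mult tendsto_const tendsto_spow tendsto_diff) auto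
qed (use assms plap_sum_term_bound in auto)

lemma plap_sum_const [simp]: "plap_sum b p (\<lambda>_. k) x = 0"
  by (simp add: plap_sum_at_def)

lemma plap_sum_affine:
  assumes "0 \<le> c"
  shows "plap_sum b p (\<lambda>x. e + c * f x) x = c powr (p - 1) * plap_sum b p f x"
proof -
  have "b x y * spow (p - 1) ((e + c * f x) - (e + c * f y))
      = c powr (p - 1) * (b x y * spow (p - 1) (f x - f y))" for y
    using spow_mult_nonneg[OF assms, of "p - 1" "f x - f y"] by (simp add: algebra_simps)
  then have "plap_sum b p (\<lambda>x. e + c * f x) x
      = (\<Sum>\<^sub>\<infinity>y. c powr (p - 1) * (b x y * spow (p - 1) (f x - f y)))"
    unfolding plap_sum_at_def by (intro infsum_cong) simp
  also have "\<dots> = c powr (p - 1) * plap_sum b p f x"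
    unfolding plap_sum_at_def by (rule infsum_cmult_right')
  finally show ?thesis .
qed

lemma plap_sum_scale:
  "0 \<le> c \<Longrightarrow> plap_sum b p (\<lambda>x. c * f x) x = c powr (p - 1) * plap_sum b p f x"
  using plap_sum_affine[where e=0] by simp

lemma plap_sum_at_nonneg:
  assumes "\<And>y. f y \<le> t"
  shows "0 \<le> plap_sum_at b p x t f"
  unfolding plap_sum_at_def
  using assms b_nonneg by (intro infsum_nonneg mult_nonneg_nonneg) (auto simp: spow_nonneg_iff)

lemma plap_sum_at_nonpos:
  assumes "\<And>y. t \<le> f y"
  shows "plap_sum_at b p x t f \<le> 0"
proof -
  have "0 \<le> (\<Sum>\<^sub>\<infinity>y. - (b x y * spow (p - 1) (t - f y)))"
    using assms b_nonneg by (intro infsum_nonneg) (auto simp: spow_nonpos_iff mult_nonneg_nonpos)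
  then show ?thesis
    by (simp add: plap_sum_at_def infsum_uminus)
qed

lemma plap_sum_at_strict_mono:
  assumes "t < t'" "\<bar>t\<bar> \<le> M" "\<bar>t'\<bar> \<le> M" "\<And>y. \<bar>f y\<bar> \<le> M"
  shows "plap_sum_at b p x t f < plap_sum_at b p x t' f"
proof -
  obtain y0 where y0: "0 < b x y0"
    using ex_neighbour by blast
  show ?thesis
    unfolding plap_sum_at_def
  proof (rule has_sum_strict_mono[OF has_sum_infsum has_sum_infsum])
    show "b x y * spow (p - 1) (t - f y) \<le> b x y * spow (p - 1) (t' - f y)" for y
      using assms p_gt_1 b_nonneg[of x y] by (intro mult_left_mono spow_mono) auto
    show "b x y0 * spow (p - 1) (t - f y0) < b x y0 * spow (p - 1) (t' - f y0)"
      using assms p_gt_1 y0 by (intro mult_strict_left_mono spow_strict_mono) auto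
  qed (use assms summable_plap_sum_at in auto)
qed

lemma plap_sum_at_antimono:
  assumes "\<And>y. f y \<le> g y" "\<bar>t\<bar> \<le> M" "\<And>y. \<bar>f y\<bar> \<le> M" "\<And>y. \<bar>g y\<bar> \<le> M"
  shows "plap_sum_at b p x t g \<le> plap_sum_at b p x t f"
  unfolding plap_sum_at_def
proof (rule infsum_mono)
  show "b x y * spow (p - 1) (t - g y) \<le> b x y * spow (p - 1) (t - f y)" for y
    using assms p_gt_1 b_nonneg[of x y] by (intro mult_left_mono spow_mono) auto
qed (use assms summable_plap_sum_at in auto)

lemma plap_sum_diff_max_propagates:
  assumes f: "f \<in> Fp b p" and g: "g \<in> Fp b p"
    and le: "plap_sum b p f z \<le> plap_sum b p g z"
    and max: "\<And>w. f w - g w \<le> f z - g z" and bzy: "0 < b z y"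
  shows "f y - g y = f z - g z"
proof -
  define t where "t = (\<lambda>w. b z w * spow (p - 1) (f z - f w) - b z w * spow (p - 1) (g z - g w))"
  have t_nonneg: "0 \<le> t w" for w
  proof -
    have "spow (p - 1) (g z - g w) \<le> spow (p - 1) (f z - f w)"
      using max[of w] p_gt_1 by (intro spow_mono) auto
    then show ?thesis
      unfolding t_def using b_nonneg[of z w] by (simp add: mult_left_mono flip: right_diff_distrib)
  qed
  have t_summable: "t summable_on UNIV"
    unfolding t_def using summable_plap_sum_Fp[OF f] summable_plap_sum_Fp[OF g]
    by (rule summable_on_diff)
  have "infsum t UNIV = plap_sum b p f z - plap_sum b p g z"
    unfolding t_def plap_sum_at_def using summable_plap_sum_Fp[OF f] summable_plap_sum_Fp[OF g]
    by (rule infsum_diff)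
  then have "infsum t UNIV \<le> 0"
    using le by simp
  then have "t y = 0"
    using nonneg_infsum_le_0D[OF _ t_summable t_nonneg] by blast
  then have "spow (p - 1) (f z - f y) = spow (p - 1) (g z - g y)"
    using bzy by (simp add: t_def flip: right_diff_distrib)
  then show ?thesis
    using p_gt_1 spow_eq_iff[of "p - 1"] by auto
qed

text \<open>The set where \<open>f - g\<close> attains a positive maximum would be closed under edges, hence all
  of the infinite vertex set; but it lies in the finite set \<open>U\<close>.\<close>

lemma comparison_principle:
  assumes U: "finite U" and f: "f \<in> Fp b p" and g: "g \<in> Fp b p"
    and le: "\<And>x. x \<in> U \<Longrightarrow> plap_sum b p f x \<le> plap_sum b p g x"
    and outside: "\<And>x. x \<notin> U \<Longrightarrow> f x \<le> g x"
  shows "f x \<le> g x"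
proof (rule ccontr)
  assume "\<not> f x \<le> g x"
  define M where "M = Max ((\<lambda>x. f x - g x) ` U)"
  have "x \<in> U"
    using outside \<open>\<not> f x \<le> g x\<close> by blast
  then have M_attained: "M \<in> (\<lambda>x. f x - g x) ` U" and "f x - g x \<le> M"
    using U unfolding M_def by (auto intro!: Max_in)
  then have M_pos: "0 < M"
    using \<open>\<not> f x \<le> g x\<close> by simp
  have le_M: "f w - g w \<le> M" for w
    using U outside[of w] M_pos by (cases "w \<in> U") (auto simp: M_def)
  define S where "S = {w \<in> U. f w - g w = M}"
  obtain a where "a \<in> S"
    using M_attained by (auto simp: S_def)
  then have "S = UNIV"
  proof (rule edge_closed_eq_UNIV)
    fix z y
    assume "z \<in> S" "0 < b z y"
    then have "f y - g y = M"
      using plap_sum_diff_max_propagates[OF f g le] le_M by (auto simp: S_def)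
    moreover from this have "y \<in> U"
      using outside[of y] M_pos by force
    ultimately show "y \<in> S"
      by (simp add: S_def)
  qed
  then show False
    using U infinite_UNIV finite_subset[of UNIV U] by (auto simp: S_def)
qed

lemma superharmonic_pos:
  assumes f: "f \<in> Fp b p" and nonneg: "\<And>x. 0 \<le> f x" and a: "0 < f a"
    and super: "\<And>x. x \<noteq> a \<Longrightarrow> 0 \<le> plap_sum b p f x"
  shows "0 < f x"
proof (rule ccontr)
  assume "\<not> 0 < f x"
  then have "x \<in> {x. f x = 0}"
    using nonneg[of x] by simp
  then have "{x. f x = 0} = UNIV"
  proof (rule edge_closed_eq_UNIV)
    fix z y
    assume z: "z \<in> {x. f x = 0}" and "0 < b z y"
    then have "z \<noteq> a"
      using a by auto
    have "(\<lambda>_. 0) y - f y = (\<lambda>_. 0) z - f z"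
      by (rule plap_sum_diff_max_propagates[OF const_in_Fp f])
        (use super[OF \<open>z \<noteq> a\<close>] z nonneg \<open>0 < b z y\<close> in auto)
    then show "y \<in> {x. f x = 0}"
      using z by simp
  qed
  then show False
    using a by (metis UNIV_I less_irrefl mem_Collect_eq)
qed

lemma summable_flux_times_finite_support:
  assumes bound: "\<And>x. \<bar>f x\<bar> \<le> M" and A: "finite A" and psi: "\<And>x. x \<notin> A \<Longrightarrow> \<psi> x = 0"
  shows "(\<lambda>(x, y). b x y * spow (p - 1) (f x - f y) * \<psi> x) summable_on UNIV"
proof -
  define Q where "Q = (\<Sum>x\<in>A. \<bar>\<psi> x\<bar>)"
  have "\<bar>b x y * spow (p - 1) (f x - f y) * \<psi> x\<bar> \<le> ((2 * M) powr (p - 1) * Q) * b x y" for x y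
  proof -
    have "\<bar>\<psi> x\<bar> \<le> Q"
      unfolding Q_def using A psi by (rule abs_le_sum_finite_support)
    then have "\<bar>b x y * spow (p - 1) (f x - f y)\<bar> * \<bar>\<psi> x\<bar> \<le> ((2 * M) powr (p - 1) * b x y) * Q"
      using plap_sum_term_bound[of "f x" M f y x] bound by (intro mult_mono) auto
    then show ?thesis
      by (simp add: abs_mult algebra_simps)
  qed
  then show ?thesis
    by (intro summable_on_pairs_finite_support[OF A]) (use psi in auto)
qed

lemma green_formula:
  assumes bound: "\<And>x. \<bar>f x\<bar> \<le> M" and A: "finite A" and psi: "\<And>x. x \<notin> A \<Longrightarrow> \<psi> x = 0"
  shows "((\<lambda>(x, y). b x y * spow (p - 1) (f x - f y) * (\<psi> x - \<psi> y))
           has_sum 2 * (\<Sum>x\<in>A. \<psi> x * plap_sum b p f x)) UNIV"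
proof -
  define P where "P = (\<lambda>(x, y). b x y * spow (p - 1) (f x - f y) * \<psi> x)"
  have P: "P summable_on UNIV"
    unfolding P_def using bound A psi by (rule summable_flux_times_finite_support)
  have "bij_betw prod.swap (UNIV :: ('a \<times> 'a) set) UNIV"
    by (simp add: bij_betw_def)
  then have "((\<lambda>z. P (prod.swap z)) has_sum infsum P UNIV) UNIV"
    using has_sum_infsum[OF P] by (subst has_sum_reindex_bij_betw)
  then have "((\<lambda>z. P z + P (prod.swap z)) has_sum 2 * infsum P UNIV) UNIV"
    using has_sum_add[OF has_sum_infsum[OF P]] by (simp only: mult_2)
  moreover have "P z + P (prod.swap z)
      = (case z of (x, y) \<Rightarrow> b x y * spow (p - 1) (f x - f y) * (\<psi> x - \<psi> y))" for z
  proof (cases z)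
    case (Pair x y)
    have "spow (p - 1) (f y - f x) = - spow (p - 1) (f x - f y)"
      by (metis minus_diff_eq spow_minus)
    then show ?thesis
      unfolding Pair P_def by (simp add: b_sym[of y x] algebra_simps)
  qed
  moreover have "infsum P UNIV = (\<Sum>x\<in>A. \<psi> x * plap_sum b p f x)"
  proof -
    have "infsum P UNIV = infsum P (A \<times> UNIV)"
      by (rule infsum_cong_neutral) (auto simp: P_def, metis psi)
    also have "\<dots> = (\<Sum>x\<in>A. \<Sum>\<^sub>\<infinity>y. P (x, y))"
      using infsum_Sigma_banach[of P A "\<lambda>_. UNIV"] summable_on_subset[OF P] A by simp
    also have "\<dots> = (\<Sum>x\<in>A. \<psi> x * plap_sum b p f x)"
      by (simp add: P_def plap_sum_at_def mult.commute[of _ "\<psi> _"] infsum_cmult_right')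
    finally show ?thesis .
  qed
  ultimately show ?thesis
    by simp
qed

section \<open>Energy and capacity\<close>

lemma energy_eq_infsum_edge_energy: "\<E> f = infsum (edge_energy b p f) UNIV / 2"
  by (simp add: energy_def edge_energy_def)

lemma edge_energy_nonneg: "0 \<le> edge_energy b p f z"
  by (cases z) (simp add: edge_energy_def b_nonneg)

lemma energy_nonneg: "0 \<le> \<E> f"
  unfolding energy_eq_infsum_edge_energy by (simp add: infsum_nonneg edge_energy_nonneg)

lemma Dp_iff_summable_edge_energy: "f \<in> Dp b (\<lambda>_. 0) p \<longleftrightarrow> edge_energy b p f summable_on UNIV"
  by (simp add: Dp_def edge_energy_def)

lemma summable_edge_energy_finite_support:
  assumes "finite A" "\<And>x. x \<notin> A \<Longrightarrow> f x = 0"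
  shows "edge_energy b p f summable_on UNIV"
proof (rule summable_on_pairs_finite_support[OF assms(1)])
  define M where "M = (\<Sum>y\<in>A. \<bar>f y\<bar>)"
  show "\<bar>edge_energy b p f (x, y)\<bar> \<le> (2 * M) powr p * b x y" for x y
  proof -
    have f_le: "\<bar>f z\<bar> \<le> M" for z
      unfolding M_def using assms by (rule abs_le_sum_finite_support)
    have "\<bar>f x - f y\<bar> \<le> 2 * M"
      using abs_triangle_ineq4[of "f x" "f y"] f_le[of x] f_le[of y] by linarith
    then have "\<bar>f x - f y\<bar> powr p \<le> (2 * M) powr p"
      using p_gt_1 by (intro powr_mono2) auto
    then show ?thesis
      using b_nonneg[of x y] by (simp add: edge_energy_def mult.commute mult_left_mono)
  qed
qed (use assms in \<open>simp add: edge_energy_def\<close>)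

lemma energy_eq_sum_plap_sum:
  assumes "finite A" "\<And>x. x \<notin> A \<Longrightarrow> f x = 0"
  shows "\<E> f = (\<Sum>x\<in>A. f x * plap_sum b p f x)"
proof -
  have "spow (p - 1) a * a = \<bar>a\<bar> powr p" for a
    using spow_times_self[of "p - 1" a] p_gt_1 by simp
  then have "2 * \<E> f = (\<Sum>\<^sub>\<infinity>(x, y). b x y * spow (p - 1) (f x - f y) * (f x - f y))"
    by (simp add: energy_def mult.assoc)
  also have "\<dots> = 2 * (\<Sum>x\<in>A. f x * plap_sum b p f x)"
    using abs_le_sum_finite_support[OF assms] assms by (intro infsumI green_formula)
  finally show ?thesis by simp
qed

lemma sum_plap_sum_harmonic_off_pole:
  assumes "finite A" "x0 \<in> A" "\<And>x. x \<in> A - {x0} \<Longrightarrow> plap_sum b p f x = 0"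
  shows "(\<Sum>x\<in>A. g x * plap_sum b p f x) = g x0 * plap_sum b p f x0"
  using assms by (simp add: sum.remove)

text \<open>Summing the tangent-line inequality for \<open>\<bar>_\<bar> powr p\<close> over all edges and applying the
  Green formula to the linear term.\<close>

lemma energy_above_tangent:
  assumes bound: "\<And>x. \<bar>f x\<bar> \<le> M" and f: "edge_energy b p f summable_on UNIV"
    and A: "finite A" and g: "\<And>x. x \<notin> A \<Longrightarrow> g x = 0"
  shows "(1 - p) * \<E> f + p * (\<Sum>x\<in>A. g x * plap_sum b p f x) \<le> \<E> g"
proof -
  define C where "C = (\<lambda>(x, y). b x y * spow (p - 1) (f x - f y) * (g x - g y))"
  have C: "(C has_sum 2 * (\<Sum>x\<in>A. g x * plap_sum b p f x)) UNIV"
    unfolding C_def using bound A g by (rule green_formula)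
  have pointwise: "(1 - p) * edge_energy b p f z + p * C z \<le> edge_energy b p g z" for z
  proof (cases z)
    case (Pair x y)
    have "b x y * ((1 - p) * \<bar>f x - f y\<bar> powr p + p * spow (p - 1) (f x - f y) * (g x - g y))
        \<le> b x y * \<bar>g x - g y\<bar> powr p"
      using abs_powr_above_tangent[OF p_gt_1] b_nonneg by (intro mult_left_mono) auto
    then show ?thesis
      unfolding Pair C_def edge_energy_def by (simp add: algebra_simps)
  qed
  have "((\<lambda>z. (1 - p) * edge_energy b p f z + p * C z)
      has_sum (1 - p) * infsum (edge_energy b p f) UNIV + p * (2 * (\<Sum>x\<in>A. g x * plap_sum b p f x))) UNIV"
    using has_sum_add[OF has_sum_cmult_right[OF has_sum_infsum[OF f]] has_sum_cmult_right[OF C]] .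
  then have "(1 - p) * infsum (edge_energy b p f) UNIV + p * (2 * (\<Sum>x\<in>A. g x * plap_sum b p f x))
      \<le> infsum (edge_energy b p g) UNIV"
    using has_sum_infsum[OF summable_edge_energy_finite_support[OF A g]] pointwise
    by (rule has_sum_mono)
  then show ?thesis
    by (simp add: energy_eq_infsum_edge_energy)
qed

lemma edge_energy_scale: "edge_energy b p (\<lambda>x. c * f x) = (\<lambda>z. \<bar>c\<bar> powr p * edge_energy b p f z)"
  by (auto simp: edge_energy_def abs_mult powr_mult fun_eq_iff simp flip: right_diff_distrib)

lemma energy_scale: "\<E> (\<lambda>x. c * f x) = \<bar>c\<bar> powr p * \<E> f"
  by (simp add: energy_eq_infsum_edge_energy edge_energy_scale infsum_cmult_right')

lemma dnorm_op_scale: "dnorm_op b (\<lambda>_. 0) p x0 (\<lambda>x. c * f x) = \<bar>c\<bar> * dnorm_op b (\<lambda>_. 0) p x0 f"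
proof -
  have "dnorm_op b (\<lambda>_. 0) p x0 (\<lambda>x. c * f x) = (\<bar>c\<bar> powr p * (\<E> f + \<bar>f x0\<bar> powr p)) powr (1 / p)"
    by (simp add: dnorm_op_def energy_scale abs_mult powr_mult algebra_simps)
  also have "\<dots> = (\<bar>c\<bar> powr p) powr (1 / p) * dnorm_op b (\<lambda>_. 0) p x0 f"
    using energy_nonneg[of f] by (simp add: dnorm_op_def powr_mult)
  also have "(\<bar>c\<bar> powr p) powr (1 / p) = \<bar>c\<bar>"
    using p_gt_1 by (simp add: powr_powr)
  finally show ?thesis .
qed

lemma D0p_scale:
  assumes f: "f \<in> D0p b (\<lambda>_. 0) p x0"
  shows "(\<lambda>x. c * f x) \<in> D0p b (\<lambda>_. 0) p x0"
  unfolding D0p_def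
proof (intro CollectI conjI allI impI)
  show "(\<lambda>x. c * f x) \<in> Dp b (\<lambda>_. 0) p"
    using f by (auto simp: D0p_def Dp_iff_summable_edge_energy edge_energy_scale intro: summable_on_cmult_right)
  fix e :: real
  assume "0 < e"
  then have "0 < e / (\<bar>c\<bar> + 1)"
    by simp
  then obtain \<phi> where \<phi>: "finite {x. \<phi> x \<noteq> 0}" "dnorm_op b (\<lambda>_. 0) p x0 (\<lambda>x. f x - \<phi> x) < e / (\<bar>c\<bar> + 1)"
    using f unfolding D0p_def by blast
  have "dnorm_op b (\<lambda>_. 0) p x0 (\<lambda>x. c * f x - c * \<phi> x) = \<bar>c\<bar> * dnorm_op b (\<lambda>_. 0) p x0 (\<lambda>x. f x - \<phi> x)"
    using dnorm_op_scale[where c=c and f="\<lambda>x. f x - \<phi> x"] by (simp add: right_diff_distrib)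
  also have "\<dots> \<le> \<bar>c\<bar> * (e / (\<bar>c\<bar> + 1))"
    using \<phi>(2) by (intro mult_left_mono) auto
  also have "\<dots> < e"
    using \<open>0 < e\<close> by (simp add: field_simps)
  finally show "\<exists>\<phi>. finite {x. \<phi> x \<noteq> 0} \<and> dnorm_op b (\<lambda>_. 0) p x0 (\<lambda>x. c * f x - \<phi> x) < e"
    using \<phi>(1) by (intro exI[of _ "\<lambda>x. c * \<phi> x"]) (auto elim: rev_finite_subset)
qed

lemma D0pI_tendsto:
  assumes f: "f \<in> Dp b (\<lambda>_. 0) p" and \<phi>: "\<And>n. finite {x. \<phi> n x \<noteq> 0}"
    and lim: "(\<lambda>n. dnorm_op b (\<lambda>_. 0) p x0 (\<lambda>x. \<phi> n x - f x)) \<longlonglongrightarrow> 0"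
  shows "f \<in> D0p b (\<lambda>_. 0) p x0"
  unfolding D0p_def
proof (intro CollectI conjI f allI impI)
  fix e :: real
  assume "0 < e"
  then obtain n where "dnorm_op b (\<lambda>_. 0) p x0 (\<lambda>x. \<phi> n x - f x) < e"
    using order_tendstoD(2)[OF lim \<open>0 < e\<close>] by (meson eventually_sequentially order_refl)
  moreover have "(\<lambda>x. f x - \<phi> n x) = (\<lambda>x. (- 1) * (\<phi> n x - f x))"
    by auto
  ultimately show "\<exists>\<phi>. finite {x. \<phi> x \<noteq> 0} \<and> dnorm_op b (\<lambda>_. 0) p x0 (\<lambda>x. f x - \<phi> x) < e"
    using \<phi>[of n] dnorm_op_scale[where c="- 1" and f="\<lambda>x. \<phi> n x - f x"] by auto
qed

lemma cap_le_energy: "cap_admissible K V \<phi> \<Longrightarrow> capacity K V \<le> \<E> \<phi>"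
  unfolding cap_eq_Inf by (rule cInf_lower) (auto intro: bdd_belowI[of _ 0] energy_nonneg)

lemma le_capacity:
  assumes "cap_admissible K V \<phi>" "\<And>\<phi>. cap_admissible K V \<phi> \<Longrightarrow> c \<le> \<E> \<phi>"
  shows "c \<le> capacity K V"
  unfolding cap_eq_Inf using assms by (intro cInf_greatest) auto

lemma cap_admissible_indicator: "finite K \<Longrightarrow> K \<subseteq> V \<Longrightarrow> cap_admissible K V (indicator K)"
  by (auto simp: cap_admissible_def indicator_def)

lemma cap_admissible_mono: "cap_admissible K V \<phi> \<Longrightarrow> V \<subseteq> W \<Longrightarrow> cap_admissible K W \<phi>"
  by (auto simp: cap_admissible_def)

lemma capacity_antimono:
  assumes "finite K" "K \<subseteq> V" "V \<subseteq> W"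
  shows "capacity K W \<le> capacity K V"
proof (rule le_capacity[OF cap_admissible_indicator[OF assms(1,2)]])
  show "capacity K W \<le> \<E> \<phi>" if "cap_admissible K V \<phi>" for \<phi>
    using cap_admissible_mono[OF that assms(3)] by (rule cap_le_energy)
qed

lemma tendsto_capacity_exhaustion:
  assumes K: "finite K" "K \<subseteq> X 0" and X: "incseq X" "(\<Union>n. X n) = UNIV"
  shows "(\<lambda>n. capacity K (X n)) \<longlonglongrightarrow> capacity K UNIV"
proof -
  have K_sub: "K \<subseteq> X n" for n
    using K(2) X(1) by (auto simp: incseq_def)
  have dec: "decseq (\<lambda>n. capacity K (X n))"
    unfolding decseq_def using X(1) by (auto simp: incseq_def intro!: capacity_antimono[OF K(1) K_sub])
  have lower: "capacity K UNIV \<le> capacity K (X n)" for n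
    using K(1) K_sub by (rule capacity_antimono) simp
  have lim: "(\<lambda>n. capacity K (X n)) \<longlonglongrightarrow> (INF n. capacity K (X n))"
    using dec lower by (intro LIMSEQ_decseq_INF bdd_belowI2) auto
  have "(INF n. capacity K (X n)) \<le> capacity K UNIV"
  proof (rule le_capacity[OF cap_admissible_indicator[OF K(1)]])
    fix \<phi> assume \<phi>: "cap_admissible K UNIV \<phi>"
    then have "\<exists>N. {x. \<phi> x \<noteq> 0} \<subseteq> X N"
      using X by (intro finite_subset_incseq) (auto simp: cap_admissible_def)
    then obtain N where "{x. \<phi> x \<noteq> 0} \<subseteq> X N" ..
    then have "cap_admissible K (X N) \<phi>"
      using \<phi> by (auto simp: cap_admissible_def)
    then have "capacity K (X N) \<le> \<E> \<phi>"
      by (rule cap_le_energy)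
    then show "(INF n. capacity K (X n)) \<le> \<E> \<phi>"
      using decseq_ge[OF dec lim, of N] by linarith
  qed simp
  moreover have "capacity K UNIV \<le> (INF n. capacity K (X n))"
    using lower by (intro cINF_greatest) auto
  ultimately show ?thesis
    using lim by simp
qed

lemma dirichlet_solI:
  assumes V: "finite V" "x0 \<in> V"
    and v: "v x0 = 1" "\<And>x. x \<notin> V \<Longrightarrow> v x = 0" "\<And>x. 0 \<le> v x \<and> v x \<le> 1"
    and harmonic: "\<And>x. x \<in> V - {x0} \<Longrightarrow> plap_sum b p v x = 0"
  shows "dirichlet_sol b m (\<lambda>_. 0) p x0 V v"
proof -
  have bound: "\<bar>v x\<bar> \<le> 1" for x
    using v(3)[of x] by simp
  have "{x. v x \<noteq> 0} \<subseteq> V"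
    using v(2) by blast
  then have admissible: "cap_admissible {x0} V v"
    using V v by (auto simp: cap_admissible_def intro: finite_subset)
  have harmonic_sum: "(\<Sum>x\<in>V. g x * plap_sum b p v x) = g x0 * plap_sum b p v x0" for g
    using V harmonic by (rule sum_plap_sum_harmonic_off_pole)
  have "\<E> v = (\<Sum>x\<in>V. v x * plap_sum b p v x)"
    using V(1) v(2) by (rule energy_eq_sum_plap_sum)
  then have energy_v: "\<E> v = plap_sum b p v x0"
    using v(1) by (simp add: harmonic_sum)
  have v_summable: "edge_energy b p v summable_on UNIV"
    using V(1) v(2) by (rule summable_edge_energy_finite_support)
  have "\<E> v \<le> \<E> \<phi>" if \<phi>: "cap_admissible {x0} V \<phi>" for \<phi>
  proof -
    have \<phi>_out: "\<And>x. x \<notin> V \<Longrightarrow> \<phi> x = 0" and "1 \<le> \<phi> x0"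
      using \<phi> by (auto simp: cap_admissible_def)
    then have "p * \<E> v \<le> p * (\<phi> x0 * \<E> v)"
      using p_gt_1 energy_nonneg[of v] by (intro mult_left_mono) (auto simp: mult_le_cancel_right1)
    moreover have "(1 - p) * \<E> v + p * (\<Sum>x\<in>V. \<phi> x * plap_sum b p v x) \<le> \<E> \<phi>"
      using bound v_summable V(1) \<phi>_out by (rule energy_above_tangent)
    ultimately show ?thesis
      by (simp add: harmonic_sum algebra_simps flip: energy_v)
  qed
  then have "\<E> v = capacity {x0} V"
    using admissible by (intro antisym le_capacity cap_le_energy)
  then show ?thesis
    using bounded_in_Fp[OF bound] harmonic v m_pos
    by (auto simp: dirichlet_sol_def plap_eq_plap_sum)
qed

end

section \<open>The Dirichlet problem on a finite set\<close>

definition dirichlet_candidates :: "'a set \<Rightarrow> 'a \<Rightarrow> ('a \<Rightarrow> real) set" where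
  "dirichlet_candidates V x0 =
     {w. w x0 = 1 \<and> (\<forall>y. y \<notin> V \<longrightarrow> w y = 0) \<and> (\<forall>y. 0 \<le> w y \<and> w y \<le> 1)}"

text \<open>One sweep of a nonlinear Jacobi iteration: at each vertex of \<open>V - {x0}\<close>, the value that
  makes the p-Laplacian vanish when the other values of \<open>w\<close> are kept fixed. For \<open>w\<close> with
  values in \<open>[0, 1]\<close> this root exists and is unique (\<open>ex1_plap_sum_at_root\<close>).\<close>

definition dirichlet_step ::
    "('a \<Rightarrow> 'a \<Rightarrow> real) \<Rightarrow> real \<Rightarrow> 'a set \<Rightarrow> 'a \<Rightarrow> ('a \<Rightarrow> real) \<Rightarrow> 'a \<Rightarrow> real" where
  "dirichlet_step b p V x0 w x =
     (if x \<in> V - {x0} then THE t. t \<in> {0..1} \<and> plap_sum_at b p x t w = 0 else w x)"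

definition dirichlet_iterate :: "('a \<Rightarrow> 'a \<Rightarrow> real) \<Rightarrow> real \<Rightarrow> 'a set \<Rightarrow> 'a \<Rightarrow> nat \<Rightarrow> 'a \<Rightarrow> real" where
  "dirichlet_iterate b p V x0 k = (dirichlet_step b p V x0 ^^ k) (\<lambda>y. if y = x0 then 1 else 0)"

lemma dirichlet_step_outside: "x \<notin> V - {x0} \<Longrightarrow> dirichlet_step b p V x0 w x = w x"
  by (simp only: dirichlet_step_def if_False)

lemma dirichlet_iterate_Suc:
  "dirichlet_iterate b p V x0 (Suc k) = dirichlet_step b p V x0 (dirichlet_iterate b p V x0 k)"
  by (simp add: dirichlet_iterate_def)

lemma dirichlet_candidates_limit:
  assumes "\<And>k. w k \<in> dirichlet_candidates V x0" and "\<And>y. (\<lambda>k. w k y) \<longlonglongrightarrow> v y"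
  shows "v \<in> dirichlet_candidates V x0"
proof -
  have w: "w k x0 = 1" "y \<notin> V \<Longrightarrow> w k y = 0" "0 \<le> w k y" "w k y \<le> 1" for k y
    using assms(1)[of k] by (auto simp: dirichlet_candidates_def)
  have "v x0 = 1"
    using assms(2)[of x0] by (simp add: w(1) LIMSEQ_const_iff)
  moreover have "v y = 0" if "y \<notin> V" for y
    using assms(2)[of y] by (simp add: w(2)[OF that] LIMSEQ_const_iff)
  moreover have "0 \<le> v y" "v y \<le> 1" for y
    using w(3,4) by (auto intro: LIMSEQ_le_const[OF assms(2)] LIMSEQ_le_const2[OF assms(2)])
  ultimately show ?thesis
    by (simp add: dirichlet_candidates_def)
qed

context plap_graph
begin

lemma continuous_on_plap_sum_at:
  assumes "\<And>y. \<bar>w y\<bar> \<le> 1"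
  shows "continuous_on {0..1} (\<lambda>t. plap_sum_at b p x t w)"
proof (rule continuous_on_sequentiallyI)
  fix t :: "nat \<Rightarrow> real" and a
  assume "\<forall>n. t n \<in> {0..1}" "t \<longlonglongrightarrow> a"
  then show "(\<lambda>n. plap_sum_at b p x (t n) w) \<longlonglongrightarrow> plap_sum_at b p x a w"
    using assms by (intro tendsto_plap_sum_at[where M=1]) auto
qed

lemma ex1_plap_sum_at_root:
  assumes w: "\<And>y. 0 \<le> w y \<and> w y \<le> 1"
  shows "\<exists>!t. t \<in> {0..1} \<and> plap_sum_at b p x t w = 0"
proof -
  have bound: "\<bar>w y\<bar> \<le> 1" for y
    using w[of y] by simp
  have "plap_sum_at b p x 0 w \<le> 0" "0 \<le> plap_sum_at b p x 1 w"
    using w by (auto intro: plap_sum_at_nonpos plap_sum_at_nonneg)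
  then obtain t where t: "t \<in> {0..1}" "plap_sum_at b p x t w = 0"
    using IVT'[of "\<lambda>t. plap_sum_at b p x t w" 0 0 1] continuous_on_plap_sum_at[OF bound] by auto
  moreover have "t' = t" if "t' \<in> {0..1}" "plap_sum_at b p x t' w = 0" for t'
    using plap_sum_at_strict_mono[of t' t 1 w x] plap_sum_at_strict_mono[of t t' 1 w x]
      that t bound by (cases t' t rule: linorder_cases) auto
  ultimately show ?thesis by blast
qed

lemma dirichlet_step_root:
  assumes "w \<in> dirichlet_candidates V x0" "x \<in> V - {x0}"
  shows "dirichlet_step b p V x0 w x \<in> {0..1}"
    and "plap_sum_at b p x (dirichlet_step b p V x0 w x) w = 0"
  using theI'[OF ex1_plap_sum_at_root, of w x] assms
  by (auto simp: dirichlet_step_def dirichlet_candidates_def)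

lemma dirichlet_step_candidates:
  assumes "w \<in> dirichlet_candidates V x0"
  shows "dirichlet_step b p V x0 w \<in> dirichlet_candidates V x0"
proof -
  have "0 \<le> dirichlet_step b p V x0 w y \<and> dirichlet_step b p V x0 w y \<le> 1" for y
    using assms dirichlet_step_root(1)[OF assms, of y] dirichlet_step_outside[of y V x0 b p w]
    by (cases "y \<in> V - {x0}") (auto simp: dirichlet_candidates_def)
  then show ?thesis
    using assms by (simp add: dirichlet_candidates_def dirichlet_step_outside)
qed

lemma dirichlet_step_mono:
  assumes w: "w \<in> dirichlet_candidates V x0" and w': "w' \<in> dirichlet_candidates V x0"
    and le: "\<And>y. w y \<le> w' y"
  shows "dirichlet_step b p V x0 w x \<le> dirichlet_step b p V x0 w' x"
proof (cases "x \<in> V - {x0}")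
  case False
  then show ?thesis using le by (simp add: dirichlet_step_outside)
next
  case True
  define t t' where "t = dirichlet_step b p V x0 w x" and "t' = dirichlet_step b p V x0 w' x"
  have t: "t \<in> {0..1}" "plap_sum_at b p x t w = 0"
    and t': "t' \<in> {0..1}" "plap_sum_at b p x t' w' = 0"
    using dirichlet_step_root[OF w True] dirichlet_step_root[OF w' True] by (simp_all add: t_def t'_def)
  have bound: "\<bar>w y\<bar> \<le> 1" "\<bar>w' y\<bar> \<le> 1" for y
    using w w' by (auto simp: dirichlet_candidates_def abs_le_iff)
  show ?thesis
  proof (rule ccontr)
    assume "\<not> ?thesis"
    then have "plap_sum_at b p x t' w < plap_sum_at b p x t w"
      using t t' bound by (intro plap_sum_at_strict_mono[where M=1]) (auto simp: t_def t'_def)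
    moreover have "plap_sum_at b p x t' w' \<le> plap_sum_at b p x t' w"
      using t' le bound by (intro plap_sum_at_antimono[where M=1]) auto
    ultimately show False using t t' by simp
  qed
qed

lemma dirichlet_iterate_candidates:
  assumes "x0 \<in> V"
  shows "dirichlet_iterate b p V x0 k \<in> dirichlet_candidates V x0"
proof (induction k)
  case 0
  show ?case
    using assms by (simp add: dirichlet_iterate_def dirichlet_candidates_def)
next
  case (Suc k)
  then show ?case
    by (simp add: dirichlet_iterate_Suc dirichlet_step_candidates)
qed

lemma incseq_dirichlet_iterate:
  assumes "x0 \<in> V"
  shows "incseq (\<lambda>k. dirichlet_iterate b p V x0 k y)"
proof (rule incseq_SucI)
  show "dirichlet_iterate b p V x0 k y \<le> dirichlet_iterate b p V x0 (Suc k) y" for k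
  proof (induction k arbitrary: y)
    case 0
    have "0 \<le> dirichlet_iterate b p V x0 1 y"
      using dirichlet_iterate_candidates[OF assms, of 1] by (simp add: dirichlet_candidates_def)
    then show ?case
      by (cases "y \<in> V - {x0}") (auto simp: dirichlet_iterate_def dirichlet_step_outside)
  next
    case (Suc k)
    then show ?case
      unfolding dirichlet_iterate_Suc[where k="Suc k"] dirichlet_iterate_Suc[where k=k]
      by (intro dirichlet_step_mono dirichlet_step_candidates dirichlet_iterate_candidates assms)
        (simp add: dirichlet_iterate_Suc)
  qed
qed

lemma dirichlet_iterate_limit_harmonic:
  assumes x0: "x0 \<in> V" and lim: "\<And>y. (\<lambda>k. dirichlet_iterate b p V x0 k y) \<longlonglongrightarrow> v y"
    and x: "x \<in> V - {x0}"
  shows "plap_sum b p v x = 0"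
proof -
  let ?w = "dirichlet_iterate b p V x0"
  have "\<bar>?w k y\<bar> \<le> 1" for k y
    using dirichlet_iterate_candidates[OF x0, of k] by (auto simp: dirichlet_candidates_def)
  then have "(\<lambda>k. plap_sum_at b p x (?w (Suc k) x) (?w k)) \<longlonglongrightarrow> plap_sum b p v x"
    using lim LIMSEQ_Suc[OF lim] by (intro tendsto_plap_sum_at[where M=1])
  moreover have "plap_sum_at b p x (?w (Suc k) x) (?w k) = 0" for k
    using dirichlet_step_root(2)[OF dirichlet_iterate_candidates[OF x0] x]
    by (simp add: dirichlet_iterate_Suc)
  ultimately show ?thesis
    by (simp add: LIMSEQ_const_iff)
qed

lemma dirichlet_exists:
  assumes V: "finite V" "x0 \<in> V"
  shows "\<exists>v. dirichlet_sol b m (\<lambda>_. 0) p x0 V v"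
proof -
  define v where "v y = (SUP k. dirichlet_iterate b p V x0 k y)" for y
  have lim: "(\<lambda>k. dirichlet_iterate b p V x0 k y) \<longlonglongrightarrow> v y" for y
    unfolding v_def using incseq_dirichlet_iterate[OF V(2)] dirichlet_iterate_candidates[OF V(2)]
    by (intro LIMSEQ_incseq_SUP bdd_aboveI[of _ 1]) (auto simp: dirichlet_candidates_def)
  have "v \<in> dirichlet_candidates V x0"
    using dirichlet_iterate_candidates[OF V(2)] lim by (rule dirichlet_candidates_limit)
  then show ?thesis
    using V dirichlet_iterate_limit_harmonic[OF V(2) lim]
    by (auto simp: dirichlet_candidates_def intro!: dirichlet_solI)
qed


end

section \<open>The p-harmonic potential and Green's function\<close>

context plap_graph
begin

lemma powr_powr_inverse_exponent:
  assumes "0 < c"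
  shows "(c powr (- 1 / (p - 1))) powr (p - 1) = 1 / c"
proof -
  have "(c powr (- 1 / (p - 1))) powr (p - 1) = c powr (- 1 / (p - 1) * (p - 1))"
    by (simp only: powr_powr)
  also have "- 1 / (p - 1) * (p - 1) = - 1"
    using p_gt_1 by simp
  finally show ?thesis
    using assms by (simp add: powr_minus_divide)
qed

lemma green_eq_plap_sum:
  assumes "green_eq b m p x0 h"
  shows "plap_sum b p h x = (if x = x0 then 1 else 0)"
  using assms m_pos[of x] by (auto simp: green_eq_def plap_eq_plap_sum split: if_splits)

end

locale dirichlet_exhaustion = plap_graph +
  fixes X :: "nat \<Rightarrow> 'a set" and x0 :: 'a and us :: "nat \<Rightarrow> 'a \<Rightarrow> real"
  assumes finite_X: "\<And>n. finite (X n)" and incseq_X: "incseq X"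
    and X_exhausts: "(\<Union>n. X n) = UNIV" and x0_in_X0: "x0 \<in> X 0"
    and dirichlet: "\<And>n. dirichlet_sol b m (\<lambda>_. 0) p x0 (X n) (us n)"
begin

lemma x0_in_X: "x0 \<in> X n"
  using x0_in_X0 incseq_X by (auto simp: incseq_def)

lemma us_Fp: "us n \<in> Fp b p"
  and us_x0: "us n x0 = 1"
  and us_outside: "x \<notin> X n \<Longrightarrow> us n x = 0"
  and energy_us: "\<E> (us n) = capacity {x0} (X n)"
  using dirichlet[of n] by (simp_all add: dirichlet_sol_def)

lemma us_harmonic:
  assumes "x \<in> X n - {x0}"
  shows "plap_sum b p (us n) x = 0"
proof -
  have "plap b m p (us n) x = 0"
    using dirichlet[of n] assms by (simp add: dirichlet_sol_def)
  then show ?thesis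
    using m_pos[of x] by (simp add: plap_eq_plap_sum)
qed

lemma us_finite_support: "finite {x. us n x \<noteq> 0}"
  using finite_X[of n] us_outside[of _ n] by (metis (mono_tags) finite_subset mem_Collect_eq subsetI)

lemma us_nonneg: "0 \<le> us n x"
proof -
  have "(\<lambda>_. 0) x \<le> us n x"
    by (rule comparison_principle[of "X n - {x0}"])
      (use finite_X const_in_Fp us_Fp us_harmonic us_x0 us_outside in auto)
  then show ?thesis by simp
qed

lemma us_le_1: "us n x \<le> 1"
proof -
  have "us n x \<le> (\<lambda>_. 1) x"
    by (rule comparison_principle[of "X n - {x0}"])
      (use finite_X const_in_Fp us_Fp us_harmonic us_x0 us_outside in auto)
  then show ?thesis by simp
qed

lemma abs_us_le_1: "\<bar>us n x\<bar> \<le> 1"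
  using us_nonneg[of n x] us_le_1[of n x] by simp

lemma us_mono:
  assumes "n \<le> k"
  shows "us n x \<le> us k x"
proof (rule comparison_principle[of "X n - {x0}"])
  have "X n \<subseteq> X k" using incseq_X assms by (simp add: incseq_def)
  then show "plap_sum b p (us n) y \<le> plap_sum b p (us k) y" if "y \<in> X n - {x0}" for y
    using that us_harmonic[of y n] us_harmonic[of y k] by auto
  show "us n y \<le> us k y" if "y \<notin> X n - {x0}" for y
    using that us_x0 us_outside[of y n] us_nonneg[of k y] by (cases "y = x0") auto
qed (use finite_X us_Fp in auto)

definition potential :: "'a \<Rightarrow> real" where
  "potential x = (SUP n. us n x)"

lemma incseq_us: "incseq (\<lambda>n. us n x)"
  using us_mono by (auto simp: incseq_def)

lemma tendsto_us: "(\<lambda>n. us n x) \<longlonglongrightarrow> potential x"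
  unfolding potential_def
  by (rule LIMSEQ_incseq_SUP[OF _ incseq_us]) (auto intro: bdd_aboveI[of _ 1] us_le_1)

lemma potential_nonneg: "0 \<le> potential x"
  using us_nonneg by (intro LIMSEQ_le_const[OF tendsto_us]) auto

lemma potential_le_1: "potential x \<le> 1"
  using us_le_1 by (intro LIMSEQ_le_const2[OF tendsto_us]) auto

lemma abs_potential_le_1: "\<bar>potential x\<bar> \<le> 1"
  using potential_nonneg[of x] potential_le_1[of x] by simp

lemma potential_x0: "potential x0 = 1"
  using tendsto_us[of x0] by (simp add: us_x0 LIMSEQ_const_iff)

lemma potential_Fp: "potential \<in> Fp b p"
  using abs_potential_le_1 by (rule bounded_in_Fp)

lemma tendsto_plap_sum_us: "(\<lambda>n. plap_sum b p (us n) x) \<longlonglongrightarrow> plap_sum b p potential x"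
  using abs_us_le_1 tendsto_us by (intro tendsto_plap_sum_at[where M=1])

lemma potential_harmonic:
  assumes "x \<noteq> x0"
  shows "plap_sum b p potential x = 0"
proof -
  obtain N where "x \<in> X N"
    using X_exhausts by blast
  then have "x \<in> X n - {x0}" if "N \<le> n" for n
    using that assms incseq_X by (auto simp: incseq_def)
  then have "eventually (\<lambda>n. plap_sum b p (us n) x = 0) sequentially"
    unfolding eventually_sequentially by (blast intro: us_harmonic)
  then have "(\<lambda>n. plap_sum b p (us n) x) \<longlonglongrightarrow> 0"
    by (rule tendsto_eventually)
  then show ?thesis
    using tendsto_plap_sum_us LIMSEQ_unique by blast
qed

lemma plap_potential: "x \<noteq> x0 \<Longrightarrow> plap b m p potential x = 0"
  by (simp add: plap_eq_plap_sum potential_harmonic)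

lemma potential_pos: "0 < potential x"
  using potential_Fp potential_nonneg
  by (rule superharmonic_pos[of _ x0]) (simp_all add: potential_x0 potential_harmonic)

lemma tendsto_energy_us: "(\<lambda>n. \<E> (us n)) \<longlonglongrightarrow> capacity {x0} UNIV"
  unfolding energy_us using x0_in_X0 incseq_X X_exhausts by (intro tendsto_capacity_exhaustion) auto

lemma plap_sum_us_x0: "plap_sum b p (us n) x0 = \<E> (us n)"
proof -
  have "\<E> (us n) = (\<Sum>x\<in>X n. us n x * plap_sum b p (us n) x)"
    using finite_X us_outside by (rule energy_eq_sum_plap_sum)
  also have "\<dots> = us n x0 * plap_sum b p (us n) x0"
    using finite_X x0_in_X us_harmonic by (rule sum_plap_sum_harmonic_off_pole)
  finally show ?thesis by (simp add: us_x0)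
qed

lemma plap_sum_potential_x0: "plap_sum b p potential x0 = capacity {x0} UNIV"
  using tendsto_plap_sum_us[of x0] tendsto_energy_us by (simp add: plap_sum_us_x0 LIMSEQ_unique)

lemma summable_edge_energy_us: "edge_energy b p (us n) summable_on UNIV"
  using finite_X us_outside by (rule summable_edge_energy_finite_support)

lemma tendsto_edge_energy_us: "(\<lambda>n. edge_energy b p (us n) z) \<longlonglongrightarrow> edge_energy b p potential z"
  using p_gt_1 by (cases z) (auto simp: edge_energy_def intro!: tendsto_intros tendsto_us)

lemma summable_edge_energy_potential: "edge_energy b p potential summable_on UNIV"
  and energy_potential_le: "\<E> potential \<le> capacity {x0} UNIV"
proof -
  have finite_sums: "sum (edge_energy b p potential) F \<le> 2 * capacity {x0} UNIV" if "finite F" for F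
  proof (rule LIMSEQ_le[OF tendsto_sum[OF tendsto_edge_energy_us]
        tendsto_mult[OF tendsto_const tendsto_energy_us]])
    have "sum (edge_energy b p (us n)) F \<le> infsum (edge_energy b p (us n)) UNIV" for n
      using summable_edge_energy_us that by (rule finite_sum_le_infsum) (simp_all add: edge_energy_nonneg)
    then show "\<exists>N. \<forall>n\<ge>N. sum (edge_energy b p (us n)) F \<le> 2 * \<E> (us n)"
      by (simp add: energy_eq_infsum_edge_energy)
  qed
  show summable: "edge_energy b p potential summable_on UNIV"
    using finite_sums edge_energy_nonneg
    by (intro nonneg_bdd_above_summable_on bdd_aboveI[of _ "2 * capacity {x0} UNIV"]) auto
  have "infsum (edge_energy b p potential) UNIV \<le> 2 * capacity {x0} UNIV"
    using summable finite_sums by (rule infsum_le_finite_sums)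
  then show "\<E> potential \<le> capacity {x0} UNIV"
    by (simp add: energy_eq_infsum_edge_energy)
qed

lemma energy_potential: "\<E> potential = capacity {x0} UNIV"
proof (rule antisym[OF energy_potential_le])
  have "(1 - p) * \<E> potential + p * capacity {x0} UNIV \<le> \<E> (us n)" for n
  proof -
    have "(1 - p) * \<E> potential + p * (\<Sum>x\<in>X n. us n x * plap_sum b p potential x) \<le> \<E> (us n)"
      using abs_potential_le_1 summable_edge_energy_potential finite_X us_outside
      by (rule energy_above_tangent)
    moreover have "(\<Sum>x\<in>X n. us n x * plap_sum b p potential x) = us n x0 * plap_sum b p potential x0"
      using finite_X x0_in_X potential_harmonic by (rule sum_plap_sum_harmonic_off_pole) simp
    ultimately show ?thesis by (simp add: us_x0 plap_sum_potential_x0)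
  qed
  then have "(1 - p) * \<E> potential + p * capacity {x0} UNIV \<le> capacity {x0} UNIV"
    by (intro LIMSEQ_le_const[OF tendsto_energy_us]) auto
  then have "(p - 1) * capacity {x0} UNIV \<le> (p - 1) * \<E> potential"
    by (simp add: algebra_simps)
  then show "capacity {x0} UNIV \<le> \<E> potential"
    using p_gt_1 by simp
qed

lemma tendsto_dnorm_us: "(\<lambda>n. dnorm_op b (\<lambda>_. 0) p x0 (\<lambda>x. us n x - potential x)) \<longlonglongrightarrow> 0"
proof -
  have "(\<lambda>n. infsum (edge_energy b p (\<lambda>x. us n x - potential x)) UNIV) \<longlonglongrightarrow> 0"
  proof (rule infsum_tendsto_0_Pratt[where a="\<lambda>n. edge_energy b p (us n)" and K="2 powr p"])
    show "edge_energy b p (\<lambda>x. us n x - potential x) z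
        \<le> 2 powr p * (edge_energy b p (us n) z + edge_energy b p potential z)" for n z
    proof (cases z)
      case (Pair x y)
      have "b x y * \<bar>(us n x - us n y) - (potential x - potential y)\<bar> powr p
          \<le> b x y * (2 powr p * (\<bar>us n x - us n y\<bar> powr p + \<bar>potential x - potential y\<bar> powr p))"
        using p_gt_1 b_nonneg by (intro mult_left_mono abs_diff_powr_le) auto
      then show ?thesis
        by (simp add: Pair edge_energy_def algebra_simps)
    qed
    show "(\<lambda>n. infsum (edge_energy b p (us n)) UNIV) \<longlonglongrightarrow> infsum (edge_energy b p potential) UNIV"
    proof -
      have "infsum (edge_energy b p potential) UNIV = 2 * capacity {x0} UNIV"
        using energy_potential by (simp add: energy_eq_infsum_edge_energy)
      then show ?thesis
        using tendsto_mult[OF tendsto_const[of 2] tendsto_energy_us]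
        by (simp add: energy_eq_infsum_edge_energy)
    qed
    show "(\<lambda>n. edge_energy b p (\<lambda>x. us n x - potential x) z) \<longlonglongrightarrow> 0" for z
      using p_gt_1 tendsto_us
      by (cases z) (auto simp: edge_energy_def intro!: tendsto_eq_intros)
  qed (use summable_edge_energy_us summable_edge_energy_potential edge_energy_nonneg
        tendsto_edge_energy_us in auto)
  then have "(\<lambda>n. (infsum (edge_energy b p (\<lambda>x. us n x - potential x)) UNIV / 2) powr (1 / p)) \<longlonglongrightarrow> 0"
    using p_gt_1 edge_energy_nonneg
    by (auto intro!: tendsto_eq_intros always_eventually infsum_nonneg)
  then show ?thesis
    by (simp add: dnorm_op_def energy_eq_infsum_edge_energy us_x0 potential_x0)
qed

lemma us_Dp: "us n \<in> Dp b (\<lambda>_. 0) p"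
  using summable_edge_energy_us by (simp add: Dp_iff_summable_edge_energy)

lemma potential_Dp: "potential \<in> Dp b (\<lambda>_. 0) p"
  using summable_edge_energy_potential by (simp add: Dp_iff_summable_edge_energy)

lemma potential_D0p: "potential \<in> D0p b (\<lambda>_. 0) p x0"
  using potential_Dp us_finite_support tendsto_dnorm_us by (rule D0pI_tendsto)

lemma potential_constant_iff: "(\<exists>k. \<forall>x. potential x = k) \<longleftrightarrow> capacity {x0} UNIV = 0"
proof
  assume "\<exists>k. \<forall>x. potential x = k"
  then have "edge_energy b p potential = (\<lambda>_. 0)"
    by (auto simp: edge_energy_def fun_eq_iff)
  then show "capacity {x0} UNIV = 0"
    using energy_potential by (simp add: energy_eq_infsum_edge_energy)
next
  assume "capacity {x0} UNIV = 0"
  then have "infsum (edge_energy b p potential) UNIV \<le> 0"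
    using energy_potential by (simp add: energy_eq_infsum_edge_energy)
  then have zero: "edge_energy b p potential z = 0" for z
    using nonneg_infsum_le_0D[OF _ summable_edge_energy_potential] edge_energy_nonneg by blast
  have "{x. potential x = potential x0} = UNIV"
  proof (rule edge_closed_eq_UNIV[of x0])
    fix x y
    assume "x \<in> {x. potential x = potential x0}" "0 < b x y"
    then show "y \<in> {x. potential x = potential x0}"
      using zero[of "(x, y)"] by (simp add: edge_energy_def)
  qed simp
  then show "\<exists>k. \<forall>x. potential x = k" by auto
qed

lemma m_plap_potential_x0: "m x0 * plap b m p potential x0 = capacity {x0} UNIV"
  using m_pos[of x0] by (simp add: plap_eq_plap_sum plap_sum_potential_x0)

lemma capacity_eq_0_iff_plap: "capacity {x0} UNIV = 0 \<longleftrightarrow> plap b m p potential x0 = 0"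
  using m_plap_potential_x0 m_pos[of x0] by auto

lemma affine_us_le_potential:
  assumes \<epsilon>: "0 \<le> \<epsilon>" "\<epsilon> \<le> 1" "\<And>x. \<epsilon> \<le> potential x"
  shows "\<epsilon> + (1 - \<epsilon>) * us n x \<le> potential x"
proof -
  have "(\<lambda>x. \<epsilon> + (1 - \<epsilon>) * us n x) x \<le> potential x"
  proof (rule comparison_principle[of "X n - {x0}"])
    have "\<bar>\<epsilon> + (1 - \<epsilon>) * us n y\<bar> \<le> 1" for y
      using \<epsilon> us_nonneg[of n y] us_le_1[of n y] mult_left_le[of "us n y" "1 - \<epsilon>"] by auto
    then show "(\<lambda>x. \<epsilon> + (1 - \<epsilon>) * us n x) \<in> Fp b p"
      by (rule bounded_in_Fp)
    show "plap_sum b p (\<lambda>x. \<epsilon> + (1 - \<epsilon>) * us n x) y \<le> plap_sum b p potential y"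
      if "y \<in> X n - {x0}" for y
      using that us_harmonic[OF that] potential_harmonic[of y] \<epsilon> by (subst plap_sum_affine) auto
    show "\<epsilon> + (1 - \<epsilon>) * us n y \<le> potential y" if "y \<notin> X n - {x0}" for y
      using that \<epsilon>(3)[of y] by (cases "y = x0") (auto simp: us_x0 potential_x0 us_outside)
  qed (use finite_X potential_Fp in auto)
  then show ?thesis
    by simp
qed

lemma INF_potential:
  assumes nonconst: "\<nexists>k. \<forall>x. potential x = k"
  shows "(INF x. potential x) = 0"
proof (rule ccontr)
  define \<epsilon> where "\<epsilon> = (INF x. potential x)"
  have \<epsilon>_le: "\<epsilon> \<le> potential x" for x
    unfolding \<epsilon>_def by (rule cINF_lower) (auto intro: bdd_belowI[of _ 0] potential_nonneg)
  have \<epsilon>: "0 \<le> \<epsilon>" "\<epsilon> \<le> 1"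
    using \<epsilon>_le[of x0] potential_nonneg unfolding \<epsilon>_def potential_x0 by (auto intro: cINF_greatest)
  assume "(INF x. potential x) \<noteq> 0"
  then have "0 < \<epsilon>"
    using \<epsilon> by (simp add: \<epsilon>_def)
  have "\<epsilon> + (1 - \<epsilon>) * potential x \<le> potential x" for x
    using affine_us_le_potential[OF \<epsilon> \<epsilon>_le]
    by (intro LIMSEQ_le_const2[OF tendsto_add[OF tendsto_const tendsto_mult[OF tendsto_const tendsto_us]]])
      auto
  then have "\<epsilon> * (1 - potential x) \<le> 0" for x
    by (simp add: algebra_simps)
  then have "potential x = 1" for x
    using \<open>0 < \<epsilon>\<close> potential_le_1[of x] by (smt (verit) mult_pos_pos)
  then show False
    using nonconst by blast
qed

definition green_scale :: real where
  "green_scale = capacity {x0} UNIV powr (- 1 / (p - 1))"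

lemma capacity_pos: "\<nexists>k. \<forall>x. potential x = k \<Longrightarrow> 0 < capacity {x0} UNIV"
  using potential_constant_iff energy_potential energy_nonneg[of potential] by auto

lemma green_scale_powr: "0 < capacity {x0} UNIV \<Longrightarrow> green_scale powr (p - 1) = 1 / capacity {x0} UNIV"
  unfolding green_scale_def by (rule powr_powr_inverse_exponent)

lemma green_scale_pos: "\<nexists>k. \<forall>x. potential x = k \<Longrightarrow> 0 < green_scale"
  using capacity_pos by (simp add: green_scale_def)

lemma green_eq_scaled_potential:
  assumes nonconst: "\<nexists>k. \<forall>x. potential x = k"
  shows "green_eq b m p x0 (\<lambda>x. green_scale * potential x)"
proof -
  have cap: "0 < capacity {x0} UNIV" and scale: "0 < green_scale"
    using capacity_pos[OF nonconst] green_scale_pos[OF nonconst] .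
  have "\<bar>green_scale * potential x\<bar> \<le> green_scale" for x
    using abs_potential_le_1[of x] scale by (simp add: abs_mult mult_left_le)
  then have "(\<lambda>x. green_scale * potential x) \<in> Fp b p"
    by (rule bounded_in_Fp)
  moreover have "plap_sum b p (\<lambda>x. green_scale * potential x) x = (if x = x0 then 1 else 0)" for x
    using scale cap potential_harmonic[of x]
    by (simp add: plap_sum_scale green_scale_powr plap_sum_potential_x0)
  ultimately show ?thesis
    using scale potential_pos m_pos by (simp add: green_eq_def plap_eq_plap_sum)
qed

text \<open>\<open>\<E>(us n) powr (-1 / (p - 1)) * us n\<close> has p-Laplacian \<open>1\<^sub>x\<^sub>0 / m\<close> on \<open>X n\<close>, so
  comparison puts it below \<open>h\<close>.\<close>

lemma scaled_potential_le_green: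
  assumes nonconst: "\<nexists>k. \<forall>x. potential x = k" and h: "green_eq b m p x0 h"
  shows "green_scale * potential x \<le> h x"
proof -
  define C where "C n = \<E> (us n) powr (- 1 / (p - 1))" for n
  have energy_pos: "0 < \<E> (us n)" for n
    using capacity_pos[OF nonconst] capacity_antimono[of "{x0}" "X n" UNIV] x0_in_X energy_us
    by fastforce
  have C_pos: "0 < C n" for n
    using energy_pos[of n] by (simp add: C_def)
  have C_powr: "C n powr (p - 1) = 1 / \<E> (us n)" for n
    unfolding C_def using energy_pos by (rule powr_powr_inverse_exponent)
  have "C n * us n x \<le> h x" for n
  proof (rule comparison_principle[of "X n"])
    have "\<bar>C n * us n y\<bar> \<le> C n" for y
      using abs_us_le_1[of n y] C_pos[of n] by (simp add: abs_mult mult_left_le)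
    then show "(\<lambda>x. C n * us n x) \<in> Fp b p"
      by (rule bounded_in_Fp)
    show "plap_sum b p (\<lambda>x. C n * us n x) y \<le> plap_sum b p h y" if "y \<in> X n" for y
      using that energy_pos[of n] us_harmonic[of y n] green_eq_plap_sum[OF h, of y]
      by (simp add: C_pos plap_sum_scale C_powr plap_sum_us_x0 less_imp_le)
    show "C n * us n y \<le> h y" if "y \<notin> X n" for y
      using h that by (simp add: us_outside green_eq_def less_imp_le)
  qed (use finite_X h in \<open>auto simp: green_eq_def\<close>)
  moreover have "(\<lambda>n. C n * us n x) \<longlonglongrightarrow> green_scale * potential x"
    unfolding C_def green_scale_def using capacity_pos[OF nonconst]
    by (intro tendsto_mult tendsto_us tendsto_powr tendsto_energy_us tendsto_const) auto
  ultimately show ?thesis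
    by (intro LIMSEQ_le_const2) auto
qed

lemma no_green_eq_if_constant:
  assumes const: "\<exists>k. \<forall>x. potential x = k"
  shows "\<not> green_eq b m p x0 h"
proof
  assume h: "green_eq b m p x0 h"
  have h_pos: "0 < h x" for x
    using h by (simp add: green_eq_def)
  have "h x0 * us n x \<le> h x" for n x
  proof (rule comparison_principle[of "X n - {x0}"])
    have "\<bar>h x0 * us n y\<bar> \<le> h x0" for y
      using abs_us_le_1[of n y] h_pos[of x0] by (simp add: abs_mult mult_left_le)
    then show "(\<lambda>x. h x0 * us n x) \<in> Fp b p"
      by (rule bounded_in_Fp)
    show "plap_sum b p (\<lambda>x. h x0 * us n x) y \<le> plap_sum b p h y" if "y \<in> X n - {x0}" for y
      using that h_pos[of x0] us_harmonic[OF that] green_eq_plap_sum[OF h, of y]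
      by (simp add: plap_sum_scale)
    show "h x0 * us n y \<le> h y" if "y \<notin> X n - {x0}" for y
      using that h_pos[of y] by (cases "y = x0") (auto simp: us_x0 us_outside)
  qed (use finite_X h in \<open>auto simp: green_eq_def\<close>)
  then have "h x0 * potential x \<le> h x" for x
    by (intro LIMSEQ_le_const2[OF tendsto_mult[OF tendsto_const tendsto_us]]) auto
  then have "h x0 \<le> h y" for y
    using const potential_x0 by (metis mult.right_neutral)
  then have "plap_sum b p h x0 \<le> 0"
    by (rule plap_sum_at_nonpos)
  then show False
    using green_eq_plap_sum[OF h, of x0] by simp
qed

lemma is_green_scaled_potential:
  "\<nexists>k. \<forall>x. potential x = k \<Longrightarrow> is_green b m p x0 (\<lambda>x. green_scale * potential x)"
  unfolding is_green_def using green_eq_scaled_potential scaled_potential_le_green by blast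

lemma is_green_eq_scaled_potential:
  assumes "is_green b m p x0 g"
  shows "\<nexists>k. \<forall>x. potential x = k" and "g = (\<lambda>x. green_scale * potential x)"
proof -
  show nonconst: "\<nexists>k. \<forall>x. potential x = k"
    using assms no_green_eq_if_constant unfolding is_green_def by blast
  show "g = (\<lambda>x. green_scale * potential x)"
  proof
    fix x
    show "g x = green_scale * potential x"
      using assms green_eq_scaled_potential[OF nonconst] scaled_potential_le_green[OF nonconst]
      unfolding is_green_def by (meson antisym)
  qed
qed

lemma ex_green_iff: "(\<exists>g. is_green b m p x0 g) \<longleftrightarrow> (\<nexists>k. \<forall>x. potential x = k)"
  using is_green_scaled_potential is_green_eq_scaled_potential(1) by blast

lemma green_scale_eq_plap: "green_scale = (m x0 * plap b m p potential x0) powr (- 1 / (p - 1))"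
  by (simp add: green_scale_def m_plap_potential_x0)

lemma is_green_eq_potential:
  assumes "is_green b m p x0 g"
  shows "g x = (m x0 * plap b m p potential x0) powr (- 1 / (p - 1)) * potential x"
  using is_green_eq_scaled_potential(2)[OF assms] by (simp add: green_scale_eq_plap)

lemma is_green_D0p: "is_green b m p x0 g \<Longrightarrow> g \<in> D0p b (\<lambda>_. 0) p x0"
  using is_green_eq_scaled_potential(2) D0p_scale[OF potential_D0p] by metis

lemma is_green_normalized:
  assumes "is_green b m p x0 g"
  shows "g x / g x0 = potential x"
  using is_green_eq_scaled_potential[OF assms] green_scale_pos by (simp add: potential_x0)

end

theorem proposition3p1:
  fixes b :: "'a \<Rightarrow> 'a \<Rightarrow> real" and m c :: "'a \<Rightarrow> real" and p :: real and x0 :: 'a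
    and X :: "nat \<Rightarrow> 'a set"
  assumes G: "weighted_graph b m c"
    and c0: "c = (\<lambda>_. 0)"
    and p: "1 < p"
    and Xfin: "\<And>n. finite (X n)"
    and Xinc: "\<And>n. X n \<subseteq> X (Suc n)"
    and Xexh: "(\<Union>n. X n) = UNIV"
    and o0: "x0 \<in> X 0"
    and Xbd: "\<And>n. X (Suc n) - X n \<subseteq> edge_bdry b (X n)"
  shows
    "(\<forall>n. \<exists>v. dirichlet_sol b m c p x0 (X n) v) \<and>
     (\<forall>us. (\<forall>n. dirichlet_sol b m c p x0 (X n) (us n)) \<longrightarrow>
        (\<forall>n x. 0 \<le> us n x \<and> us n x \<le> us (Suc n) x \<and> us (Suc n) x \<le> 1) \<and>
        (\<exists>u.
           (\<forall>x. (\<lambda>n. us n x) \<longlonglongrightarrow> u x) \<and>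
           (\<forall>n. us n \<in> Dp b c p) \<and> u \<in> Dp b c p \<and>
           (\<lambda>n. dnorm_op b c p x0 (\<lambda>x. us n x - u x)) \<longlonglongrightarrow> 0 \<and>
           u \<in> D0p b c p x0 \<and> u \<in> Fp b p \<and>
           (\<forall>x. x \<noteq> x0 \<longrightarrow> plap b m p u x = 0) \<and> u x0 = 1 \<and>
           (\<forall>x. 0 < u x \<and> u x \<le> 1) \<and>
           energy b c p u = cap b c p {x0} UNIV \<and>
           ((\<exists>k. \<forall>x. u x = k) \<longleftrightarrow> cap b c p {x0} UNIV = 0) \<and>
           (cap b c p {x0} UNIV = 0 \<longleftrightarrow> plap b m p u x0 = 0) \<and>
           (\<not> (\<exists>k. \<forall>x. u x = k) \<longrightarrow> (INF x. u x) = 0) \<and>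
           ((\<exists>g. is_green b m p x0 g) \<longleftrightarrow> \<not> (\<exists>k. \<forall>x. u x = k)) \<and>
           (\<forall>g. is_green b m p x0 g \<longrightarrow>
              (\<forall>x. g x = (m x0 * plap b m p u x0) powr (-1 / (p - 1)) * u x) \<and>
              g \<in> D0p b c p x0 \<and>
              (\<forall>x. g x / g x0 = u x))))"
proof -
  interpret plap_graph b m p
    using G p by unfold_locales (simp add: c0)
  have incseq_X: "incseq X"
    using Xinc by (rule incseq_SucI)
  have x0_in_X: "x0 \<in> X n" for n
    using o0 incseq_X by (auto simp: incseq_def)
  show ?thesis
    unfolding c0
    apply (intro conjI[OF allI allI] impI)
     apply (rule dirichlet_exists[OF Xfin x0_in_X])
    subgoal premises dirichlet for us
    proof -
      interpret dirichlet_exhaustion b m p X x0 us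
        using Xfin incseq_X Xexh o0 dirichlet by unfold_locales auto
      show ?thesis
        by (intro conjI exI[of _ potential] allI impI)
          (assumption | rule us_nonneg us_mono[OF less_imp_le[OF lessI]] us_le_1 tendsto_us us_Dp
            potential_Dp tendsto_dnorm_us potential_D0p potential_Fp plap_potential potential_x0
            potential_pos potential_le_1 energy_potential potential_constant_iff
            capacity_eq_0_iff_plap INF_potential ex_green_iff is_green_eq_potential is_green_D0p
            is_green_normalized)+
    qed
    done
qed

end
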